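(* In the lattice vertex operator algebra $V_Q$ of the $E_6$ root lattice (setting below), let $\omega_{E_6}=\frac12\sum_{i=1}^6\alpha_i(-1)\lambda_i(-1)(1\otimes e^0)$ and let $\omega_{F_4}=\frac1{20}\sum_iu_i(-1)u^i(-1)(1\otimes e^0)$ be the Sugawara vector of the $F_4$ subalgebra $\mathfrak a$. Then the coset vector $\omega=\omega_{E_6}-\omega_{F_4}$ is $$\begin{aligned}\omega=&\tfrac1{10}\big[(-\lambda_1+\lambda_6)(-1)^2+(\lambda_3-\lambda_5)(-1)^2+(\lambda_1-\lambda_3+\lambda_5-\lambda_6)(-1)^2\big]\otimes e^0\\&+\tfrac15\big(-1\otimes e^{\alpha_1-\alpha_6}-1\otimes e^{\alpha_3-\alpha_5}+1\otimes e^{\alpha_1+\alpha_3-\alpha_5-\alpha_6}\big)\\&+\tfrac15\big(-1\otimes e^{-\alpha_1+\alpha_6}-1\otimes e^{-\alpha_3+\alpha_5}+1\otimes e^{-\alpha_1-\alpha_3+\alpha_5+\alpha_6}\big).\end{aligned}$$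
   Context: Setting. $Q$ is the root lattice of $E_6$ with simple roots $\alpha_1,\dots,\alpha_6$ labelled so that the Dynkin diagram is the chain $\alpha_1-\alpha_3-\alpha_4-\alpha_5-\alpha_6$ with $\alpha_2$ attached to $\alpha_4$; $\langle\cdot,\cdot\rangle$ is given by the Cartan matrix. $\lambda_i$ are the fundamental weights ($\langle\lambda_i,\alpha_j\rangle=\delta_{ij}$), $P=\bigoplus\mathbb Z\lambda_i$, $\mathfrak h=\mathbb C\otimes P$, $\Phi=\{\alpha\in Q:\langle\alpha,\alpha\rangle=2\}$. $\varepsilon:P\times P\to\{\pm1\}$ is bimultiplicative with $[\varepsilon(\lambda_i,\lambda_j)]$ having rows $(1,1,1,1,1,1)$, $(-1,1,1,1,1,-1)$, $(-1,1,1,1,1,1)$, $(1,-1,1,1,1,1)$, $(1,1,1,1,1,-1)$, $(1,1,1,1,1,1)$. $V_Q=S(\hat{\mathfrak h}^-)\otimes\mathbb C[Q]$ with Heisenberg operators $h(n)$ ($[h(m),h'(n)]=m\langle h,h'\rangle\delta_{m+n,0}$, $h(n)1=0$ for $n>0$, $h(0)(u\otimes e^\beta)=\langle h,\beta\rangle u\otimes e^\beta$) and $Y(1\otimes e^\alpha,z)=\exp(\sum_{k\ge1}\frac{\alpha(-k)}kz^k)\exp(-\sum_{k\ge1}\frac{\alpha(k)}kz^{-k})e_\alpha z^{\alpha(0)}=\sum_n\{1\otimes e^\alpha\}_nz^{-n-1}$, $e_\alpha(u\otimes e^\beta)=\varepsilon(\alpha,\beta)u\otimes e^{\alpha+\beta}$,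 $z^{\alpha(0)}(u\otimes e^\beta)=z^{\langle\alpha,\beta\rangle}u\otimes e^\beta$. $\mathfrak g=\mathfrak h\oplus\bigoplus_{\alpha\in\Phi}\mathbb Cx_\alpha$ (type $E_6$) has invariant form $\langle x_\alpha,x_\beta\rangle=\varepsilon(\alpha,-\alpha)\delta_{\alpha+\beta,0}$, $\langle\mathfrak h,x_\alpha\rangle=0$; $x(n)$ for $x\in\mathfrak g$ acts by $h(n)$ for $h\in\mathfrak h$ and $x_\alpha(n)=\{1\otimes e^\alpha\}_n$. $\tau$ is the diagram automorphism $\alpha_1\leftrightarrow\alpha_6$, $\alpha_3\leftrightarrow\alpha_5$, acting on $\mathfrak g$ linearly on $\mathfrak h$ and by $x_\alpha\mapsto x_{\tau\alpha}$; $\mathfrak a$ (type $F_4$) is the $\tau$-fixed subalgebra, with basis $\alpha_2,\alpha_4,\alpha_3+\alpha_5,\alpha_1+\alpha_6\in\mathfrak h$, $x_\alpha$ ($\tau\alpha=\alpha$), $x_\alpha+x_{\tau\alpha}$ ($\tau\alpha\ne\alpha$). $\{u_i\}$ is a basis of $\mathfrak a$, $\{u^i\}$ its dual basis with respect to $\langle\cdot,\cdot\rangle|_{\mathfrak a}$. *)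

theory Defs
  imports Complex_Main "HOL-Library.Poly_Mapping" "HOL-Library.Function_Algebras"
begin

text \<open>Simple roots alpha_1..alpha_6 of E6, labelled so that the Dynkin diagram is the
chain 1-3-4-5-6 with 2 attached to 4.\<close>

datatype idx = I1 | I2 | I3 | I4 | I5 | I6

definition idxs :: "idx set" where "idxs = {I1, I2, I3, I4, I5, I6}"

definition adj :: "idx \<Rightarrow> idx \<Rightarrow> bool" where
  "adj i j \<longleftrightarrow> {i, j} \<in> {{I1, I3}, {I3, I4}, {I4, I5}, {I5, I6}, {I2, I4}}"

definition cartan :: "idx \<Rightarrow> idx \<Rightarrow> int" where
  "cartan i j = (if i = j then 2 else if adj i j then -1 else 0)"

text \<open>Root lattice Q: elements are integer coordinate vectors w.r.t. the simple roots.\<close>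
type_synonym rlat = "idx \<Rightarrow> int"

text \<open>h = C tensor P = C tensor Q: complex coordinate vectors w.r.t. the simple roots.\<close>
type_synonym hvec = "idx \<Rightarrow> complex"

definition lform :: "rlat \<Rightarrow> rlat \<Rightarrow> int" where
  "lform a b = (\<Sum>i\<in>idxs. \<Sum>j\<in>idxs. a i * cartan i j * b j)"

definition hform :: "hvec \<Rightarrow> hvec \<Rightarrow> complex" where
  "hform h h' = (\<Sum>i\<in>idxs. \<Sum>j\<in>idxs. h i * of_int (cartan i j) * h' j)"

definition alphaQ :: "idx \<Rightarrow> rlat" where "alphaQ i = (\<lambda>j. if j = i then 1 else 0)"

definition toH :: "rlat \<Rightarrow> hvec" where "toH a = (\<lambda>i. of_int (a i))"

definition alphaH :: "idx \<Rightarrow> hvec" where "alphaH i = toH (alphaQ i)"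

definition lam :: "idx \<Rightarrow> hvec" where
  "lam i = (THE h. \<forall>j\<in>idxs. hform h (alphaH j) = (if j = i then 1 else 0))"

definition Phi :: "rlat set" where "Phi = {a. lform a a = 2}"

text \<open>Weight lattice P: integer coordinate vectors w.r.t. the fundamental weights.
  Q is embedded into P via alpha_j = sum_i <alpha_i,alpha_j> lambda_i.\<close>
type_synonym wlat = "idx \<Rightarrow> int"

definition QtoP :: "rlat \<Rightarrow> wlat" where
  "QtoP a = (\<lambda>i. \<Sum>j\<in>idxs. cartan i j * a j)"

text \<open>Matrix [epsilon(lambda_i, lambda_j)]; entries -1 at (2,1),(2,6),(3,1),(4,2),(5,6).\<close>
definition epsneg :: "idx \<Rightarrow> idx \<Rightarrow> bool" where
  "epsneg i j \<longleftrightarrow> (i, j) \<in> {(I2, I1), (I2, I6), (I3, I1), (I4, I2), (I5, I6)}"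

definition epsP :: "wlat \<Rightarrow> wlat \<Rightarrow> int" where
  "epsP a b = (\<Prod>i\<in>idxs. \<Prod>j\<in>idxs.
      (if epsneg i j \<and> odd (a i * b j) then -1 else 1))"

definition epsQ :: "rlat \<Rightarrow> rlat \<Rightarrow> int" where "epsQ a b = epsP (QtoP a) (QtoP b)"

text \<open>S(h^-) is the polynomial algebra in the variables alpha_i(-k-1), i in idxs, k :: nat;
  the variable alpha_i(-k-1) is indexed by (i,k).\<close>
type_synonym mono = "(idx \<times> nat) \<Rightarrow>\<^sub>0 nat"
type_synonym fock = "mono \<Rightarrow>\<^sub>0 complex"

text \<open>V_Q = S(h^-) tensor C[Q]: finitely supported maps Q -> S(h^-); u tensor e^beta is
  Poly_Mapping.single beta u.\<close>
type_synonym VQ = "rlat \<Rightarrow>\<^sub>0 fock"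

definition pconst :: "complex \<Rightarrow> fock" where "pconst c = Poly_Mapping.single 0 c"

definition pvar :: "idx \<times> nat \<Rightarrow> fock" where
  "pvar v = Poly_Mapping.single (Poly_Mapping.single v 1) 1"

definition pderiv_var :: "idx \<times> nat \<Rightarrow> fock \<Rightarrow> fock" where
  "pderiv_var v p = (\<Sum>m\<in>Poly_Mapping.keys p.
      Poly_Mapping.single (m - Poly_Mapping.single v 1)
        (of_nat (Poly_Mapping.lookup m v) * Poly_Mapping.lookup p m))"

definition hmul :: "hvec \<Rightarrow> nat \<Rightarrow> fock \<Rightarrow> fock" where
  "hmul h n p = (\<Sum>i\<in>idxs. pconst (h i) * pvar (i, n - 1)) * p"

text \<open>h(n), n >= 1, acting on S(h^-) as the derivation with h(n) alpha_i(-m) = n <h,alpha_i> delta_nm.\<close>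
definition hder :: "hvec \<Rightarrow> nat \<Rightarrow> fock \<Rightarrow> fock" where
  "hder h n p = (\<Sum>i\<in>idxs. pconst (of_nat n * hform h (alphaH i)) * pderiv_var (i, n - 1) p)"

definition vmap :: "(rlat \<Rightarrow> fock \<Rightarrow> fock) \<Rightarrow> VQ \<Rightarrow> VQ" where
  "vmap F v = (\<Sum>b\<in>Poly_Mapping.keys v. Poly_Mapping.single b (F b (Poly_Mapping.lookup v b)))"

definition vscale :: "complex \<Rightarrow> VQ \<Rightarrow> VQ" where
  "vscale c v = vmap (\<lambda>_ p. pconst c * p) v"

definition tens :: "fock \<Rightarrow> rlat \<Rightarrow> VQ" where "tens u b = Poly_Mapping.single b u"

definition vac :: VQ where "vac = tens 1 0"

definition heis :: "hvec \<Rightarrow> int \<Rightarrow> VQ \<Rightarrow> VQ" where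
  "heis h n v =
     (if n < 0 then vmap (\<lambda>_ p. hmul h (nat (- n)) p) v
      else if n = 0 then vmap (\<lambda>b p. pconst (hform h (toH b)) * p) v
      else vmap (\<lambda>_ p. hder h (nat n) p) v)"

text \<open>Coefficients of the exponentials of commuting operators:
  exp(sum_{k>=1} alpha(-k)/k z^k) = sum_i Em_i z^i and
  exp(- sum_{k>=1} alpha(k)/k z^(-k)) = sum_j Ep_j z^(-j),
  computed by the recursion i E_i = sum_{k=1}^i k a_k E_(i-k) for E = exp(sum a_k z^k).\<close>
primrec Emlist :: "hvec \<Rightarrow> nat \<Rightarrow> (fock \<Rightarrow> fock) list" where
  "Emlist h 0 = [id]"
| "Emlist h (Suc i) = Emlist h i @
     [\<lambda>p. pconst (1 / of_nat (Suc i)) *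
          (\<Sum>k\<in>{1..Suc i}. hmul h k ((Emlist h i ! (Suc i - k)) p))]"

primrec Eplist :: "hvec \<Rightarrow> nat \<Rightarrow> (fock \<Rightarrow> fock) list" where
  "Eplist h 0 = [id]"
| "Eplist h (Suc i) = Eplist h i @
     [\<lambda>p. pconst (1 / of_nat (Suc i)) *
          (\<Sum>k\<in>{1..Suc i}. - hder h k ((Eplist h i ! (Suc i - k)) p))]"

definition Em :: "hvec \<Rightarrow> int \<Rightarrow> fock \<Rightarrow> fock" where
  "Em h i p = (if i < 0 then 0 else (Emlist h (nat i) ! nat i) p)"

definition Ep :: "hvec \<Rightarrow> nat \<Rightarrow> fock \<Rightarrow> fock" where
  "Ep h j p = (Eplist h j ! j) p"

text \<open>Upper bound for the weight of a polynomial; Ep_j vanishes on it for larger j.\<close>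
definition wtb :: "fock \<Rightarrow> nat" where
  "wtb p = (\<Sum>m\<in>Poly_Mapping.keys p. \<Sum>v\<in>Poly_Mapping.keys m. Poly_Mapping.lookup m v * (snd v + 1))"

text \<open>The mode {1 tensor e^alpha}_n, i.e. the coefficient of z^(-n-1) in
  Y(1 tensor e^alpha, z) = E^-(z) E^+(z) e_alpha z^(alpha(0)).\<close>
definition emode :: "rlat \<Rightarrow> int \<Rightarrow> VQ \<Rightarrow> VQ" where
  "emode a n v = (\<Sum>b\<in>Poly_Mapping.keys v. Poly_Mapping.single (a + b)
      (pconst (of_int (epsQ a b)) *
        (\<Sum>j\<in>{0..wtb (Poly_Mapping.lookup v b)}.
           Em (toH a) (int j - n - 1 - lform a b) (Ep (toH a) j (Poly_Mapping.lookup v b)))))"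

text \<open>An element x of g = h + sum_{alpha in Phi} C x_alpha is given by its coordinates:
  x (Inl i) is the coefficient of alpha_i in the h-part, x (Inr alpha) the coefficient of x_alpha.\<close>
type_synonym gel = "(idx + rlat) \<Rightarrow> complex"

definition in_g :: "gel \<Rightarrow> bool" where
  "in_g x \<longleftrightarrow> (\<forall>a. a \<notin> Phi \<longrightarrow> x (Inr a) = 0)"

definition hpart :: "gel \<Rightarrow> hvec" where "hpart x = (\<lambda>i. x (Inl i))"

definition gform :: "gel \<Rightarrow> gel \<Rightarrow> complex" where
  "gform x y = hform (hpart x) (hpart y)
     + (\<Sum>a\<in>Phi. x (Inr a) * y (Inr (- a)) * of_int (epsQ a (- a)))"

definition gmode :: "gel \<Rightarrow> int \<Rightarrow> VQ \<Rightarrow> VQ" where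
  "gmode x n v = heis (hpart x) n v + (\<Sum>a\<in>Phi. vscale (x (Inr a)) (emode a n v))"

definition tauI :: "idx \<Rightarrow> idx" where
  "tauI i = (case i of I1 \<Rightarrow> I6 | I6 \<Rightarrow> I1 | I3 \<Rightarrow> I5 | I5 \<Rightarrow> I3 | _ \<Rightarrow> i)"

definition tauQ :: "rlat \<Rightarrow> rlat" where "tauQ a = (\<lambda>i. a (tauI i))"

definition tauG :: "gel \<Rightarrow> gel" where
  "tauG x = (\<lambda>k. case k of Inl i \<Rightarrow> x (Inl (tauI i)) | Inr a \<Rightarrow> x (Inr (tauQ a)))"

definition in_a :: "gel \<Rightarrow> bool" where "in_a x \<longleftrightarrow> in_g x \<and> tauG x = x"

definition gsmult :: "complex \<Rightarrow> gel \<Rightarrow> gel" where "gsmult c x = (\<lambda>k. c * x k)"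

definition is_basis_a :: "nat \<Rightarrow> (nat \<Rightarrow> gel) \<Rightarrow> bool" where
  "is_basis_a d u \<longleftrightarrow> (\<forall>i<d. in_a (u i))
     \<and> (\<forall>c. (\<Sum>i<d. gsmult (c i) (u i)) = 0 \<longrightarrow> (\<forall>i<d. c i = 0))
     \<and> (\<forall>x. in_a x \<longrightarrow> (\<exists>c. x = (\<Sum>i<d. gsmult (c i) (u i))))"

definition is_dual_basis_a :: "nat \<Rightarrow> (nat \<Rightarrow> gel) \<Rightarrow> (nat \<Rightarrow> gel) \<Rightarrow> bool" where
  "is_dual_basis_a d u u' \<longleftrightarrow> (\<forall>i<d. in_a (u' i))
     \<and> (\<forall>i<d. \<forall>j<d. gform (u i) (u' j) = (if i = j then 1 else 0))"

definition omegaE6 :: VQ where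
  "omegaE6 = vscale (1/2) (\<Sum>i\<in>idxs. heis (alphaH i) (-1) (heis (lam i) (-1) vac))"

definition omegaF4 :: "nat \<Rightarrow> (nat \<Rightarrow> gel) \<Rightarrow> (nat \<Rightarrow> gel) \<Rightarrow> VQ" where
  "omegaF4 d u u' = vscale (1/20) (\<Sum>i<d. gmode (u i) (-1) (gmode (u' i) (-1) vac))"

end

theory Submission
  imports Defs
begin

text \<open>
  Since \<open>x(-1) y(-1) vac\<close> is bilinear in \<open>(x, y)\<close>, \<open>\<omega>\<^sub>F\<^sub>4\<close> only depends on the tensor
  \<open>\<Sum>\<^sub>i u\<^sub>i \<otimes> u\<^sup>i\<close>, the Casimir tensor of \<open>\<frak>a\<close>.  It is the \<open>\<tau>\<close>-average of the Casimir tensor of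
  \<open>\<frak>g\<close>: \<open>(\<lambda>\<^sub>r + \<lambda>\<^sub>\<tau>\<^sub>r)/2\<close> dual to \<open>\<alpha>\<^sub>r\<close> on \<open>\<frak>h\<close>, and \<open>\<epsilon>(\<alpha>,-\<alpha>)(x\<^sub>-\<^sub>\<alpha> + x\<^sub>-\<^sub>\<tau>\<^sub>\<alpha>)/2\<close> dual to
  \<open>x\<^sub>\<alpha>\<close>, so the basis drops out.  Evaluating the vertex operators on the vacuum, the
  \<open>\<frak>h\<close>-part and the pairs \<open>x\<^sub>\<alpha>, x\<^sub>-\<^sub>\<alpha>\<close> give a quadratic form in the \<open>\<alpha>\<^sub>i(-1)\<close> (the
  \<open>\<alpha>(-2)\<close> terms cancel between \<open>\<plusminus>\<alpha>\<close>), while a pair \<open>x\<^sub>\<alpha>, x\<^sub>-\<^sub>\<tau>\<^sub>\<alpha>\<close> with \<open>\<tau>\<alpha> \<noteq> \<alpha>\<close>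
  has \<open>\<langle>\<alpha>, \<tau>\<alpha>\<rangle> = 0\<close> and contributes \<open>\<plusminus>e\<^sup>\<alpha>\<^sup>-\<^sup>\<tau>\<^sup>\<alpha>\<close>.  After enumerating the 72 roots this
  is a finite computation.
\<close>

definition vec6 :: "int \<Rightarrow> int \<Rightarrow> int \<Rightarrow> int \<Rightarrow> int \<Rightarrow> int \<Rightarrow> rlat" where
  "vec6 a b c d e f = (\<lambda>i. case i of I1 \<Rightarrow> a | I2 \<Rightarrow> b | I3 \<Rightarrow> c | I4 \<Rightarrow> d | I5 \<Rightarrow> e | I6 \<Rightarrow> f)"

lemma vec6_apply [simp]:
  "vec6 a b c d e f I1 = a" "vec6 a b c d e f I2 = b" "vec6 a b c d e f I3 = c"
  "vec6 a b c d e f I4 = d" "vec6 a b c d e f I5 = e" "vec6 a b c d e f I6 = f"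
  by (simp_all add: vec6_def)

lemma vec6_eq_iff [simp]:
  "vec6 a b c d e f = vec6 a' b' c' d' e' f' \<longleftrightarrow>
   a = a' \<and> b = b' \<and> c = c' \<and> d = d' \<and> e = e' \<and> f = f'"
  by (metis vec6_apply vec6_def)

lemma rlat_eq_vec6: "x = vec6 (x I1) (x I2) (x I3) (x I4) (x I5) (x I6)"
  by (simp add: vec6_def fun_eq_iff split: idx.split)

lemma vec6_add [simp]:
  "vec6 a b c d e f + vec6 a' b' c' d' e' f' = vec6 (a+a') (b+b') (c+c') (d+d') (e+e') (f+f')"
  by (simp add: vec6_def fun_eq_iff split: idx.split)

lemma vec6_diff [simp]:
  "vec6 a b c d e f - vec6 a' b' c' d' e' f' = vec6 (a-a') (b-b') (c-c') (d-d') (e-e') (f-f')"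
  by (simp add: vec6_def fun_eq_iff split: idx.split)

lemma vec6_uminus [simp]: "- vec6 a b c d e f = vec6 (-a) (-b) (-c) (-d) (-e) (-f)"
  by (simp add: vec6_def fun_eq_iff split: idx.split)

lemma zero_eq_vec6: "(0::rlat) = vec6 0 0 0 0 0 0"
  by (simp add: vec6_def fun_eq_iff split: idx.split)

lemma vec6_eq_0_iff [simp]:
  "vec6 a b c d e f = 0 \<longleftrightarrow> a = 0 \<and> b = 0 \<and> c = 0 \<and> d = 0 \<and> e = 0 \<and> f = 0"
  "0 = vec6 a b c d e f \<longleftrightarrow> a = 0 \<and> b = 0 \<and> c = 0 \<and> d = 0 \<and> e = 0 \<and> f = 0"
  by (auto simp: zero_eq_vec6)

lemma alphaQ_vec6:
  "alphaQ I1 = vec6 1 0 0 0 0 0" "alphaQ I2 = vec6 0 1 0 0 0 0" "alphaQ I3 = vec6 0 0 1 0 0 0"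
  "alphaQ I4 = vec6 0 0 0 1 0 0" "alphaQ I5 = vec6 0 0 0 0 1 0" "alphaQ I6 = vec6 0 0 0 0 0 1"
  by (simp_all add: alphaQ_def vec6_def fun_eq_iff split: idx.split)

lemma idxs_UNIV: "idxs = UNIV"
  using idx.exhaust by (auto simp: idxs_def)

lemma in_idxs [simp]: "i \<in> idxs"
  by (simp add: idxs_UNIV)

lemma finite_idxs [simp]: "finite idxs"
  by (simp add: idxs_def)

lemma sum_idxs: "(\<Sum>i\<in>idxs. f i) = f I1 + f I2 + f I3 + f I4 + f I5 + f I6"
  by (simp add: idxs_def add.assoc)

lemma prod_idxs: "(\<Prod>i\<in>idxs. f i) = f I1 * f I2 * f I3 * f I4 * f I5 * f I6"
  by (simp add: idxs_def mult.assoc)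

lemma cartan_simps [simp]:
  "cartan I1 I1 = 2" "cartan I1 I2 = 0" "cartan I1 I3 = -1"
  "cartan I1 I4 = 0" "cartan I1 I5 = 0" "cartan I1 I6 = 0"
  "cartan I2 I1 = 0" "cartan I2 I2 = 2" "cartan I2 I3 = 0"
  "cartan I2 I4 = -1" "cartan I2 I5 = 0" "cartan I2 I6 = 0"
  "cartan I3 I1 = -1" "cartan I3 I2 = 0" "cartan I3 I3 = 2"
  "cartan I3 I4 = -1" "cartan I3 I5 = 0" "cartan I3 I6 = 0"
  "cartan I4 I1 = 0" "cartan I4 I2 = -1" "cartan I4 I3 = -1"
  "cartan I4 I4 = 2" "cartan I4 I5 = -1" "cartan I4 I6 = 0"
  "cartan I5 I1 = 0" "cartan I5 I2 = 0" "cartan I5 I3 = 0"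
  "cartan I5 I4 = -1" "cartan I5 I5 = 2" "cartan I5 I6 = -1"
  "cartan I6 I1 = 0" "cartan I6 I2 = 0" "cartan I6 I3 = 0"
  "cartan I6 I4 = 0" "cartan I6 I5 = -1" "cartan I6 I6 = 2"
  by (simp_all add: cartan_def adj_def doubleton_eq_iff)

lemma lform_expand:
  "lform x y = 2 * (x I1 * y I1) - x I1 * y I3 + 2 * (x I2 * y I2) - x I2 * y I4 - x I3 * y I1
    + 2 * (x I3 * y I3) - x I3 * y I4 - x I4 * y I2 - x I4 * y I3 + 2 * (x I4 * y I4) - x I4 * y I5
    - x I5 * y I4 + 2 * (x I5 * y I5) - x I5 * y I6 - x I6 * y I5 + 2 * (x I6 * y I6)"
  by (simp add: lform_def sum_idxs algebra_simps)

lemma hform_expand: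
  "hform x y = 2 * (x I1 * y I1) - x I1 * y I3 + 2 * (x I2 * y I2) - x I2 * y I4 - x I3 * y I1
    + 2 * (x I3 * y I3) - x I3 * y I4 - x I4 * y I2 - x I4 * y I3 + 2 * (x I4 * y I4) - x I4 * y I5
    - x I5 * y I4 + 2 * (x I5 * y I5) - x I5 * y I6 - x I6 * y I5 + 2 * (x I6 * y I6)"
  by (simp add: hform_def sum_idxs algebra_simps)

lemma lform_uminus_right: "lform a (- b) = - lform a b"
  by (simp add: lform_expand)

lemma lform_0_right [simp]: "lform a 0 = 0"
  by (simp add: lform_def)

definition parity_sign :: "int \<Rightarrow> int" where
  "parity_sign n = (if odd n then -1 else 1)"

lemma QtoP_simps [simp]:
  "QtoP a I1 = 2 * a I1 - a I3" "QtoP a I2 = 2 * a I2 - a I4" "QtoP a I3 = 2 * a I3 - a I1 - a I4"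
  "QtoP a I4 = 2 * a I4 - a I2 - a I3 - a I5" "QtoP a I5 = 2 * a I5 - a I4 - a I6"
  "QtoP a I6 = 2 * a I6 - a I5"
  by (simp_all add: QtoP_def sum_idxs)

lemma QtoP_uminus: "QtoP (- a) = - QtoP a"
  by (simp add: QtoP_def fun_eq_iff sum_negf[symmetric])

lemma epsP_expand:
  "epsP p q = parity_sign (p I2 * q I1) * parity_sign (p I2 * q I6) * parity_sign (p I3 * q I1)
     * parity_sign (p I4 * q I2) * parity_sign (p I5 * q I6)"
  by (simp add: epsP_def prod_idxs epsneg_def parity_sign_def)

lemma epsQ_expand:
  "epsQ a b = parity_sign (QtoP a I2 * QtoP b I1) * parity_sign (QtoP a I2 * QtoP b I6)
     * parity_sign (QtoP a I3 * QtoP b I1) * parity_sign (QtoP a I4 * QtoP b I2)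
     * parity_sign (QtoP a I5 * QtoP b I6)"
  by (simp add: epsQ_def epsP_expand)

lemma epsQ_0_right [simp]: "epsQ a 0 = 1"
  by (simp add: epsQ_expand parity_sign_def)

lemma epsQ_uminus_commute: "epsQ a (- a) = epsQ (- a) a"
  by (simp del: QtoP_simps add: epsQ_def epsP_expand QtoP_uminus parity_sign_def)

lemma epsQ_uminus_cases: "epsQ a (- a) = 1 \<or> epsQ a (- a) = -1"
  unfolding epsQ_expand by (auto simp: parity_sign_def)

lemma tauI_simps [simp]:
  "tauI I1 = I6" "tauI I2 = I2" "tauI I3 = I5" "tauI I4 = I4" "tauI I5 = I3" "tauI I6 = I1"
  by (simp_all add: tauI_def)

lemma tauQ_apply [simp]:
  "tauQ a I1 = a I6" "tauQ a I2 = a I2" "tauQ a I3 = a I5"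
  "tauQ a I4 = a I4" "tauQ a I5 = a I3" "tauQ a I6 = a I1"
  by (simp_all add: tauQ_def)

lemma tauQ_vec6 [simp]: "tauQ (vec6 a b c d e f) = vec6 f b e d c a"
  by (simp add: tauQ_def vec6_def fun_eq_iff split: idx.split)

lemma tauQ_tauQ [simp]: "tauQ (tauQ a) = a"
  by (simp add: tauQ_def fun_eq_iff tauI_def split: idx.split)

lemma tauQ_uminus: "tauQ (- a) = - tauQ a"
  by (simp add: tauQ_def fun_eq_iff)

lemma tauQ_eq_uminus_iff: "tauQ b = - a \<longleftrightarrow> b = - tauQ a"
  by (metis tauQ_tauQ tauQ_uminus)

lemma lform_tauQ: "lform (tauQ a) (tauQ b) = lform a b"
  by (simp add: lform_expand algebra_simps)

lemma epsQ_tauQ_uminus: "epsQ (tauQ a) (- tauQ a) = epsQ a (- a)"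
  by (simp add: epsQ_expand parity_sign_def algebra_simps)

section \<open>The root system\<close>

lemma int_bound_of_sum_squares:
  fixes x b c m s :: int
  assumes "m = s + c * x\<^sup>2" and "0 \<le> s" and "m < c * (b + 1)\<^sup>2" and "0 < c" and "0 \<le> b"
  shows "x \<in> {-b..b}"
proof -
  have "c * x\<^sup>2 < c * (b + 1)\<^sup>2"
    using assms(1-3) by linarith
  then have "\<bar>x\<bar>\<^sup>2 < (b + 1)\<^sup>2"
    using assms(4) by simp
  then have "\<bar>x\<bar> < b + 1"
    using assms(5) power2_less_imp_less by fastforce
  then show ?thesis by auto
qed

text \<open>Completing squares in the positive definite form \<open>lform\<close>, isolating each coordinate in turn.\<close>

lemma lform_sum_of_squares:
  shows
    "4 * lform a a = (2 * (2 * a I2 - a I4)\<^sup>2 + 2 * (2 * a I3 - a I4 - a I1)\<^sup>2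
       + (2 * a I4 - 2 * a I5 - a I1)\<^sup>2 + (2 * a I5 - 2 * a I6 - a I1)\<^sup>2 + (2 * a I6 - a I1)\<^sup>2)
       + 3 * (a I1)\<^sup>2"
    "60 * lform a a = (30 * (2 * a I1 - a I3)\<^sup>2 + 10 * (3 * a I3 - 2 * a I4)\<^sup>2
       + 5 * (4 * a I4 - 3 * a I5 - 3 * a I2)\<^sup>2 + 3 * (5 * a I5 - 4 * a I6 - 3 * a I2)\<^sup>2
       + 18 * (2 * a I6 - a I2)\<^sup>2) + 30 * (a I2)\<^sup>2"
    "60 * lform a a = (30 * (2 * a I1 - a I3)\<^sup>2 + 30 * (2 * a I2 - a I4)\<^sup>2
       + 10 * (3 * a I4 - 2 * a I5 - 2 * a I3)\<^sup>2 + 5 * (4 * a I5 - 3 * a I6 - 2 * a I3)\<^sup>2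
       + 3 * (5 * a I6 - 2 * a I3)\<^sup>2) + 18 * (a I3)\<^sup>2"
    "6 * lform a a = (3 * (2 * a I1 - a I3)\<^sup>2 + 3 * (2 * a I2 - a I4)\<^sup>2
       + (3 * a I3 - 2 * a I4)\<^sup>2 + 3 * (2 * a I5 - a I6 - a I4)\<^sup>2 + (3 * a I6 - a I4)\<^sup>2)
       + 1 * (a I4)\<^sup>2"
    "30 * lform a a = (15 * (2 * a I1 - a I3)\<^sup>2 + 15 * (2 * a I2 - a I4)\<^sup>2
       + 5 * (3 * a I3 - 2 * a I4)\<^sup>2 + (5 * a I4 - 6 * a I5)\<^sup>2 + 15 * (2 * a I6 - a I5)\<^sup>2)
       + 9 * (a I5)\<^sup>2"
    "60 * lform a a = (30 * (2 * a I1 - a I3)\<^sup>2 + 30 * (2 * a I2 - a I4)\<^sup>2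
       + 10 * (3 * a I3 - 2 * a I4)\<^sup>2 + 2 * (5 * a I4 - 6 * a I5)\<^sup>2 + 3 * (4 * a I5 - 5 * a I6)\<^sup>2)
       + 45 * (a I6)\<^sup>2"
  by (simp_all add: lform_expand power2_eq_square algebra_simps)

lemma root_coords_bounded:
  assumes "lform a a = 2"
  shows "a I1 \<in> {-1..1}" "a I2 \<in> {-2..2}" "a I3 \<in> {-2..2}"
    "a I4 \<in> {-3..3}" "a I5 \<in> {-2..2}" "a I6 \<in> {-1..1}"
proof -
  show "a I1 \<in> {-1..1}"
    using lform_sum_of_squares(1)[of a]
    by (rule int_bound_of_sum_squares) (simp_all add: assms add_nonneg_nonneg)
  show "a I2 \<in> {-2..2}"
    using lform_sum_of_squares(2)[of a]
    by (rule int_bound_of_sum_squares) (simp_all add: assms add_nonneg_nonneg)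
  show "a I3 \<in> {-2..2}"
    using lform_sum_of_squares(3)[of a]
    by (rule int_bound_of_sum_squares) (simp_all add: assms add_nonneg_nonneg)
  show "a I4 \<in> {-3..3}"
    using lform_sum_of_squares(4)[of a]
    by (rule int_bound_of_sum_squares) (simp_all add: assms add_nonneg_nonneg)
  show "a I5 \<in> {-2..2}"
    using lform_sum_of_squares(5)[of a]
    by (rule int_bound_of_sum_squares) (simp_all add: assms add_nonneg_nonneg)
  show "a I6 \<in> {-1..1}"
    using lform_sum_of_squares(6)[of a]
    by (rule int_bound_of_sum_squares) (simp_all add: assms add_nonneg_nonneg)
qed

definition E6_roots :: "rlat list" where
  "E6_roots = [vec6 (-1) (-2) (-2) (-3) (-2) (-1), vec6 (-1) (-1) (-2) (-3) (-2) (-1),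
    vec6 (-1) (-1) (-2) (-2) (-2) (-1), vec6 (-1) (-1) (-2) (-2) (-1) (-1),
    vec6 (-1) (-1) (-2) (-2) (-1) 0, vec6 (-1) (-1) (-1) (-2) (-2) (-1),
    vec6 (-1) (-1) (-1) (-2) (-1) (-1), vec6 (-1) (-1) (-1) (-2) (-1) 0,
    vec6 (-1) (-1) (-1) (-1) (-1) (-1), vec6 (-1) (-1) (-1) (-1) (-1) 0,
    vec6 (-1) (-1) (-1) (-1) 0 0, vec6 (-1) 0 (-1) (-1) (-1) (-1), vec6 (-1) 0 (-1) (-1) (-1) 0,
    vec6 (-1) 0 (-1) (-1) 0 0, vec6 (-1) 0 (-1) 0 0 0, vec6 (-1) 0 0 0 0 0,
    vec6 0 (-1) (-1) (-2) (-2) (-1), vec6 0 (-1) (-1) (-2) (-1) (-1), vec6 0 (-1) (-1) (-2) (-1) 0,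
    vec6 0 (-1) (-1) (-1) (-1) (-1), vec6 0 (-1) (-1) (-1) (-1) 0, vec6 0 (-1) (-1) (-1) 0 0,
    vec6 0 (-1) 0 (-1) (-1) (-1), vec6 0 (-1) 0 (-1) (-1) 0, vec6 0 (-1) 0 (-1) 0 0,
    vec6 0 (-1) 0 0 0 0, vec6 0 0 (-1) (-1) (-1) (-1), vec6 0 0 (-1) (-1) (-1) 0,
    vec6 0 0 (-1) (-1) 0 0, vec6 0 0 (-1) 0 0 0, vec6 0 0 0 (-1) (-1) (-1), vec6 0 0 0 (-1) (-1) 0,
    vec6 0 0 0 (-1) 0 0, vec6 0 0 0 0 (-1) (-1), vec6 0 0 0 0 (-1) 0, vec6 0 0 0 0 0 (-1),
    vec6 0 0 0 0 0 1, vec6 0 0 0 0 1 0, vec6 0 0 0 0 1 1, vec6 0 0 0 1 0 0, vec6 0 0 0 1 1 0,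
    vec6 0 0 0 1 1 1, vec6 0 0 1 0 0 0, vec6 0 0 1 1 0 0, vec6 0 0 1 1 1 0, vec6 0 0 1 1 1 1,
    vec6 0 1 0 0 0 0, vec6 0 1 0 1 0 0, vec6 0 1 0 1 1 0, vec6 0 1 0 1 1 1, vec6 0 1 1 1 0 0,
    vec6 0 1 1 1 1 0, vec6 0 1 1 1 1 1, vec6 0 1 1 2 1 0, vec6 0 1 1 2 1 1, vec6 0 1 1 2 2 1,
    vec6 1 0 0 0 0 0, vec6 1 0 1 0 0 0, vec6 1 0 1 1 0 0, vec6 1 0 1 1 1 0, vec6 1 0 1 1 1 1,
    vec6 1 1 1 1 0 0, vec6 1 1 1 1 1 0, vec6 1 1 1 1 1 1, vec6 1 1 1 2 1 0, vec6 1 1 1 2 1 1,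
    vec6 1 1 1 2 2 1, vec6 1 1 2 2 1 0, vec6 1 1 2 2 1 1, vec6 1 1 2 2 2 1, vec6 1 1 2 3 2 1,
    vec6 1 2 2 3 2 1]"

lemma E6_roots_complete:
  "\<forall>x1\<in>{-1, 0, 1}. \<forall>x2\<in>{-2, -1, 0, 1, 2}. \<forall>x3\<in>{-2, -1, 0, 1, 2}.
   \<forall>x4\<in>{-3, -2, -1, 0, 1, 2, 3}. \<forall>x5\<in>{-2, -1, 0, 1, 2}. \<forall>x6\<in>{-1, 0, 1}.
     lform (vec6 x1 x2 x3 x4 x5 x6) (vec6 x1 x2 x3 x4 x5 x6) = 2
       \<longrightarrow> vec6 x1 x2 x3 x4 x5 x6 \<in> set E6_roots"
  unfolding E6_roots_def lform_expand by simp

lemma Phi_eq: "Phi = set E6_roots"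
proof
  show "Phi \<subseteq> set E6_roots"
  proof
    fix a assume "a \<in> Phi"
    then have a: "lform a a = 2" by (simp add: Phi_def)
    have ranges: "{-1..1::int} = {-1, 0, 1}" "{-2..2::int} = {-2, -1, 0, 1, 2}"
      "{-3..3::int} = {-3, -2, -1, 0, 1, 2, 3}" by auto
    show "a \<in> set E6_roots"
      using E6_roots_complete root_coords_bounded[OF a] a rlat_eq_vec6[of a]
      unfolding ranges by (metis (no_types, lifting))
  qed
  show "set E6_roots \<subseteq> Phi"
    unfolding E6_roots_def by (simp add: Phi_def lform_expand)
qed

lemma finite_Phi: "finite Phi"
  by (simp add: Phi_eq)

lemma sum_Phi: "(\<Sum>a\<in>Phi. f a) = sum_list (map f E6_roots)"
  by (simp add: Phi_eq sum.distinct_set_conv_list E6_roots_def)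

lemma uminus_in_Phi: "a \<in> Phi \<Longrightarrow> - a \<in> Phi"
  by (simp add: Phi_def lform_expand)

lemma tauQ_in_Phi: "a \<in> Phi \<Longrightarrow> tauQ a \<in> Phi"
  by (simp add: Phi_def lform_tauQ)

lemma zero_notin_Phi: "0 \<notin> Phi"
  by (simp add: Phi_def lform_expand)

lemma sum_Phi_reflect: "(\<Sum>a\<in>Phi. f a) = (\<Sum>a\<in>Phi. f (- a))"
  by (rule sum.reindex_bij_witness[of _ uminus uminus]) (auto simp: uminus_in_Phi)

lemma pconst_add: "pconst (a + b) = pconst a + pconst b"
  by (simp add: pconst_def single_add)

lemma pconst_mult: "pconst (a * b) = pconst a * pconst b"
  by (simp add: pconst_def mult_single)

lemma pconst_0 [simp]: "pconst 0 = 0"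
  by (simp add: pconst_def)

lemma pconst_1 [simp]: "pconst 1 = 1"
  by (simp add: pconst_def)

lemma pconst_uminus: "pconst (- a) = - pconst a"
  by (simp add: pconst_def single_uminus)

lemma pconst_sum: "pconst (\<Sum>i\<in>A. f i) = (\<Sum>i\<in>A. pconst (f i))"
  by (induction A rule: infinite_finite_induct) (simp_all add: pconst_add)

lemma lookup_pconst_mult: "Poly_Mapping.lookup (pconst c * p) m = c * Poly_Mapping.lookup p m"
  by (simp add: pconst_def mult_map_scale_conv_mult[symmetric] map.rep_eq when_def)

lemma lookup_mult_pconst: "Poly_Mapping.lookup (p * pconst c) m = c * Poly_Mapping.lookup p m"
  by (simp add: mult.commute[of p] lookup_pconst_mult)

lemma single_sum: "Poly_Mapping.single k (\<Sum>i\<in>A. f i) = (\<Sum>i\<in>A. Poly_Mapping.single k (f i))"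
  by (induction A rule: infinite_finite_induct) (simp_all add: single_add)

lemma add_single_ne_0 [simp]: "(m :: mono) + Poly_Mapping.single v (Suc 0) \<noteq> 0"
proof
  assume "m + Poly_Mapping.single v (Suc 0) = 0"
  then have "Poly_Mapping.lookup (m + Poly_Mapping.single v (Suc 0)) v = 0" by simp
  then show False by (simp add: lookup_add)
qed

lemma add_single_minus_single:
  "((m :: mono) + Poly_Mapping.single v (1::nat)) - Poly_Mapping.single v 1 = m"
  by (rule poly_mapping_eqI) (simp add: lookup_add lookup_minus lookup_single when_def)

lemma minus_single_add_single:
  "Poly_Mapping.lookup m v \<noteq> 0 \<Longrightarrow>
    ((m :: mono) - Poly_Mapping.single v (1::nat)) + Poly_Mapping.single v 1 = m"
  by (rule poly_mapping_eqI) (auto simp: lookup_add lookup_minus lookup_single when_def)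

lemma lookup_pderiv_var:
  fixes p :: fock
  shows "Poly_Mapping.lookup (pderiv_var v p) m' =
    of_nat (Poly_Mapping.lookup m' v + 1) * Poly_Mapping.lookup p (m' + Poly_Mapping.single v 1)"
proof -
  let ?m = "m' + Poly_Mapping.single v (1::nat)"
  let ?c = "\<lambda>m. of_nat (Poly_Mapping.lookup m v) * Poly_Mapping.lookup p m"
  have "Poly_Mapping.lookup (pderiv_var v p) m' =
      (\<Sum>m\<in>Poly_Mapping.keys p. if m - Poly_Mapping.single v 1 = m' then ?c m else 0)"
    by (simp add: pderiv_var_def lookup_sum lookup_single when_def)
  also have "\<dots> = (\<Sum>m\<in>Poly_Mapping.keys p. if m = ?m then ?c m else 0)"
  proof (rule sum.cong [OF refl])
    fix m
    show "(if m - Poly_Mapping.single v 1 = m' then ?c m else 0) = (if m = ?m then ?c m else 0)"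
      using minus_single_add_single[of m v] add_single_minus_single[of m' v]
      by (cases "Poly_Mapping.lookup m v = 0") (auto simp: lookup_add)
  qed
  also have "\<dots> = ?c ?m"
    by (simp add: sum.delta' in_keys_iff)
  finally show ?thesis
    by (simp add: lookup_add)
qed

lemma pderiv_var_add: "pderiv_var v (p + q) = pderiv_var v p + pderiv_var v q"
  by (rule poly_mapping_eqI) (simp add: lookup_pderiv_var lookup_add algebra_simps)

lemma pderiv_var_pconst_mult: "pderiv_var v (pconst c * p) = pconst c * pderiv_var v p"
  by (rule poly_mapping_eqI)
    (simp add: lookup_pderiv_var lookup_pconst_mult lookup_mult_pconst algebra_simps)

lemma pderiv_var_0 [simp]: "pderiv_var v 0 = 0"
  by (simp add: pderiv_var_def)

lemma pderiv_var_sum: "pderiv_var v (\<Sum>i\<in>A. f i) = (\<Sum>i\<in>A. pderiv_var v (f i))"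
  by (induction A rule: infinite_finite_induct) (simp_all add: pderiv_var_add)

lemma pderiv_var_pvar: "pderiv_var v (pvar w) = (if v = w then 1 else 0)"
proof (rule poly_mapping_eqI)
  fix m
  have "Poly_Mapping.single w (1::nat) = (m :: mono) + Poly_Mapping.single v 1 \<longleftrightarrow> m = 0 \<and> w = v"
  proof
    assume eq: "Poly_Mapping.single w (1::nat) = m + Poly_Mapping.single v 1"
    then have "Poly_Mapping.lookup (Poly_Mapping.single w (1::nat)) v = Poly_Mapping.lookup m v + 1"
      by (simp add: lookup_add)
    then have "w = v"
      by (auto simp: lookup_single when_def split: if_splits)
    with eq show "m = 0 \<and> w = v"
      by (metis add_cancel_right_left)
  qed auto
  then show "Poly_Mapping.lookup (pderiv_var v (pvar w)) m =
      Poly_Mapping.lookup (if v = w then 1 else 0) m"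
    by (auto simp: lookup_pderiv_var pvar_def lookup_single when_def lookup_one)
qed

text \<open>\<open>hvar h k\<close> is the polynomial \<open>h(-k-1)\<close> in \<open>S(\<frak>h\<^sup>-)\<close>.\<close>

definition hvar :: "hvec \<Rightarrow> nat \<Rightarrow> fock" where
  "hvar h k = (\<Sum>i\<in>idxs. pconst (h i) * pvar (i, k))"

lemma hmul_eq_hvar_mult: "hmul h n p = hvar h (n - 1) * p"
  by (simp add: hmul_def hvar_def)

lemma hvar_add: "hvar (\<lambda>i. h i + g i) k = hvar h k + hvar g k"
  by (simp add: hvar_def pconst_add distrib_right sum.distrib)

lemma pconst_mult_hvar: "pconst c * hvar h k = hvar (\<lambda>i. c * h i) k"
  by (simp add: hvar_def sum_distrib_left pconst_mult mult.assoc)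

lemma hvar_sum: "hvar (\<lambda>i. \<Sum>j\<in>A. f j i) k = (\<Sum>j\<in>A. hvar (f j) k)"
  by (induction A rule: infinite_finite_induct) (simp_all add: hvar_add hvar_def)

lemma pderiv_var_hvar: "pderiv_var (j, k') (hvar h k) = (if k' = k then pconst (h j) else 0)"
  by (cases "k' = k")
    (simp_all add: hvar_def pderiv_var_sum pderiv_var_pconst_mult pderiv_var_pvar if_distrib
      cong: if_cong)

lemma alphaH_apply: "alphaH i j = (if j = i then 1 else 0)"
  by (simp add: alphaH_def toH_def alphaQ_def)

lemma hder_pconst [simp]: "hder h n (pconst c) = 0"
  by (simp add: hder_def pderiv_var_def pconst_def)

lemma hder_0 [simp]: "hder h n 0 = 0"
  by (simp add: hder_def pderiv_var_def)

lemma hder_1_hvar_0: "hder h 1 (hvar g 0) = pconst (hform h g)"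
proof -
  have "hder h 1 (hvar g 0) = (\<Sum>i\<in>idxs. pconst (hform h (alphaH i) * g i))"
    by (simp add: hder_def pderiv_var_hvar pconst_mult)
  also have "\<dots> = pconst (hform h g)"
    by (simp add: pconst_sum[symmetric] sum_idxs hform_expand alphaH_apply algebra_simps)
  finally show ?thesis .
qed

lemma hder_hvar_0: "2 \<le> n \<Longrightarrow> hder h n (hvar g 0) = 0"
  by (simp add: hder_def pderiv_var_hvar)

lemma length_Emlist [simp]: "length (Emlist h i) = Suc i"
  by (induction i) auto

lemma length_Eplist [simp]: "length (Eplist h i) = Suc i"
  by (induction i) auto

lemma Emlist_nth: "m \<le> i \<Longrightarrow> Emlist h i ! m = Emlist h m ! m"
proof (induction i)
  case (Suc i)
  show ?case
  proof (cases "m \<le> i")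
    case True
    then show ?thesis using Suc by (simp add: nth_append)
  next
    case False
    then show ?thesis using Suc.prems by (simp add: le_Suc_eq)
  qed
qed simp

lemma Eplist_nth: "m \<le> i \<Longrightarrow> Eplist h i ! m = Eplist h m ! m"
proof (induction i)
  case (Suc i)
  show ?case
  proof (cases "m \<le> i")
    case True
    then show ?thesis using Suc by (simp add: nth_append)
  next
    case False
    then show ?thesis using Suc.prems by (simp add: le_Suc_eq)
  qed
qed simp

definition Em_nat :: "hvec \<Rightarrow> nat \<Rightarrow> fock \<Rightarrow> fock" where
  "Em_nat h i p = (Emlist h i ! i) p"

lemma Em_eq_Em_nat: "Em h i p = (if i < 0 then 0 else Em_nat h (nat i) p)"
  by (simp add: Em_def Em_nat_def)

lemma Em_nat_0 [simp]: "Em_nat h 0 p = p"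
  by (simp add: Em_nat_def)

lemma Ep_0 [simp]: "Ep h 0 p = p"
  by (simp add: Ep_def)

lemma Em_nat_Suc:
  "Em_nat h (Suc i) p =
     pconst (1 / of_nat (Suc i)) * (\<Sum>k\<in>{1..Suc i}. hmul h k (Em_nat h (Suc i - k) p))"
proof -
  have "Em_nat h (Suc i) p = pconst (1 / of_nat (Suc i)) *
      (\<Sum>k\<in>{1..Suc i}. hmul h k ((Emlist h i ! (Suc i - k)) p))"
    unfolding Em_nat_def by (simp only: Emlist.simps nth_append length_Emlist) simp
  also have "\<dots> = pconst (1 / of_nat (Suc i)) *
      (\<Sum>k\<in>{1..Suc i}. hmul h k (Em_nat h (Suc i - k) p))"
    unfolding Em_nat_def by (intro arg_cong2[where f = "(*)"] sum.cong refl, subst Emlist_nth) auto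
  finally show ?thesis .
qed

lemma Ep_Suc:
  "Ep h (Suc i) p =
     pconst (1 / of_nat (Suc i)) * (\<Sum>k\<in>{1..Suc i}. - hder h k (Ep h (Suc i - k) p))"
proof -
  have "Ep h (Suc i) p = pconst (1 / of_nat (Suc i)) *
      (\<Sum>k\<in>{1..Suc i}. - hder h k ((Eplist h i ! (Suc i - k)) p))"
    unfolding Ep_def by (simp only: Eplist.simps nth_append length_Eplist) simp
  also have "\<dots> = pconst (1 / of_nat (Suc i)) *
      (\<Sum>k\<in>{1..Suc i}. - hder h k (Ep h (Suc i - k) p))"
    unfolding Ep_def by (intro arg_cong2[where f = "(*)"] sum.cong refl, subst Eplist_nth) auto
  finally show ?thesis .
qed

lemma Em_nat_pconst_mult: "Em_nat h i (pconst c * p) = pconst c * Em_nat h i p"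
proof (induction i rule: less_induct)
  case (less i)
  show ?case
  proof (cases i)
    case (Suc j)
    have "Em_nat h i (pconst c * p) = pconst (1 / of_nat (Suc j)) *
        (\<Sum>k\<in>{1..Suc j}. hmul h k (pconst c * Em_nat h (Suc j - k) p))"
      unfolding Suc Em_nat_Suc
      by (intro arg_cong2[where f = "(*)"] refl sum.cong) (auto simp: less.IH Suc)
    also have "(\<Sum>k\<in>{1..Suc j}. hmul h k (pconst c * Em_nat h (Suc j - k) p))
        = pconst c * (\<Sum>k\<in>{1..Suc j}. hmul h k (Em_nat h (Suc j - k) p))"
      unfolding hmul_eq_hvar_mult sum_distrib_left
      by (rule sum.cong) (simp_all add: mult.left_commute)
    finally show ?thesis
      unfolding Suc Em_nat_Suc by (simp only: mult.left_commute)
  qed simp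
qed

lemma Em_pconst_mult: "Em h i (pconst c * p) = pconst c * Em h i p"
  by (simp add: Em_eq_Em_nat Em_nat_pconst_mult)

lemma Em_0_right [simp]: "Em h i 0 = 0"
  using Em_pconst_mult[of h i 0 0] by simp

lemma Em_0 [simp]: "Em h 0 p = p"
  by (simp add: Em_eq_Em_nat)

lemma Em_nat_1: "Em_nat h (Suc 0) p = hvar h 0 * p"
  using Em_nat_Suc[of h 0 p] by (simp add: hmul_eq_hvar_mult)

lemma Em_1: "Em h 1 p = hvar h 0 * p"
  by (simp add: Em_eq_Em_nat Em_nat_1)

lemma Em_2: "Em h 2 p = pconst (1/2) * (hvar h 0 * (hvar h 0 * p) + hvar h 1 * p)"
proof -
  have "{1..Suc (Suc 0)} = {1, 2}" by auto
  then have "Em_nat h (Suc (Suc 0)) p = pconst (1/2) * (hvar h 0 * (hvar h 0 * p) + hvar h 1 * p)"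
    by (simp add: Em_nat_Suc[of h "Suc 0"] Em_nat_1 hmul_eq_hvar_mult)
  then show ?thesis
    by (simp add: Em_eq_Em_nat numeral_2_eq_2)
qed

lemma Ep_1: "Ep h 1 p = - hder h 1 p"
  using Ep_Suc[of h 0 p] by simp

lemma Ep_1_hvar_0: "Ep h 1 (hvar g 0) = - pconst (hform h g)"
  by (simp only: Ep_1 hder_1_hvar_0)

lemma Ep_hvar_0: "2 \<le> j \<Longrightarrow> Ep h j (hvar g 0) = 0"
proof (induction j rule: less_induct)
  case (less j)
  then obtain i where j: "j = Suc i" by (cases j) auto
  have "- hder h k (Ep h (Suc i - k) (hvar g 0)) = 0" if k: "k \<in> {1..Suc i}" for k
  proof -
    consider "Suc i - k = 0" | "Suc i - k = 1" | "2 \<le> Suc i - k" by linarith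
    then show ?thesis
    proof cases
      case 1
      then have "2 \<le> k" using less.prems j k by auto
      then show ?thesis using 1 by (simp add: hder_hvar_0)
    next
      case 2
      then show ?thesis using Ep_1_hvar_0[of h g] by (simp add: pconst_uminus[symmetric])
    next
      case 3
      then show ?thesis using less.IH[of "Suc i - k"] k j by simp
    qed
  qed
  then show ?case by (simp add: j Ep_Suc)
qed

lemma wtb_pconst [simp]: "wtb (pconst c) = 0"
  by (simp add: wtb_def pconst_def)

lemma pderiv_var_wtb_0:
  assumes "wtb p = 0" shows "pderiv_var v p = 0"
proof -
  have keys: "m = 0" if m: "m \<in> Poly_Mapping.keys p" for m
  proof (rule poly_mapping_eqI)
    fix w
    have "\<forall>w\<in>Poly_Mapping.keys m. Poly_Mapping.lookup m w * (snd w + 1) = 0"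
      using assms m by (simp add: wtb_def sum_eq_0_iff)
    then show "Poly_Mapping.lookup m w = Poly_Mapping.lookup 0 w"
      by (metis in_keys_iff lookup_zero mult_is_0 add_is_0 one_neq_zero)
  qed
  show ?thesis
  proof (rule poly_mapping_eqI)
    fix m
    have "m + Poly_Mapping.single v 1 \<notin> Poly_Mapping.keys p"
      using keys add_single_ne_0[of m v] by (metis One_nat_def)
    then show "Poly_Mapping.lookup (pderiv_var v p) m = Poly_Mapping.lookup 0 m"
      by (simp add: lookup_pderiv_var in_keys_iff)
  qed
qed

lemma Ep_1_wtb_0: "wtb p = 0 \<Longrightarrow> Ep h 1 p = 0"
  by (simp only: Ep_1) (simp add: hder_def pderiv_var_wtb_0)

lemma sum_atLeast0_atMost_two:
  fixes F :: "nat \<Rightarrow> 'a::comm_monoid_add"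
  assumes "\<And>j. 2 \<le> j \<Longrightarrow> F j = 0" and "w = 0 \<Longrightarrow> F 1 = 0"
  shows "(\<Sum>j\<in>{0..w}. F j) = F 0 + F 1"
  using assms
proof (induction w)
  case (Suc w)
  then show ?case by (cases "w = 0") simp_all
qed simp

definition emode_coeff :: "rlat \<Rightarrow> int \<Rightarrow> rlat \<Rightarrow> fock \<Rightarrow> fock" where
  "emode_coeff a n b p =
     (\<Sum>j\<in>{0..wtb p}. Em (toH a) (int j - n - 1 - lform a b) (Ep (toH a) j p))"

lemma emode_coeff_0 [simp]: "emode_coeff a n b 0 = 0"
  by (simp add: emode_coeff_def wtb_def)

lemma emode_coeff_pconst:
  "emode_coeff a (-1) b (pconst c) = pconst c * Em (toH a) (- lform a b) 1"
  using Em_pconst_mult[of "toH a" "- lform a b" c 1] by (simp add: emode_coeff_def)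

lemma emode_coeff_hvar_0:
  "emode_coeff a (-1) 0 (hvar h 0) = hvar h 0 - hvar (toH a) 0 * pconst (hform (toH a) h)"
proof -
  have "emode_coeff a (-1) 0 (hvar h 0)
      = Em (toH a) 0 (Ep (toH a) 0 (hvar h 0)) + Em (toH a) 1 (Ep (toH a) 1 (hvar h 0))"
    unfolding emode_coeff_def
    by (subst sum_atLeast0_atMost_two) (auto simp: Ep_hvar_0 Ep_1_wtb_0 simp del: One_nat_def)
  then show ?thesis
    by (simp only: Ep_1_hvar_0 Em_1 Em_0 Ep_0) (simp add: pconst_uminus)
qed

lemma lookup_sum_single:
  "Poly_Mapping.lookup (\<Sum>b\<in>A. Poly_Mapping.single b (f b)) k = (\<Sum>b\<in>A. if b = k then f b else 0)"
  by (simp add: lookup_sum lookup_single when_def)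

lemma vmap_eq_sum_superset:
  assumes "finite S" and "Poly_Mapping.keys v \<subseteq> S" and "\<And>b. F b 0 = 0"
  shows "vmap F v = (\<Sum>b\<in>S. Poly_Mapping.single b (F b (Poly_Mapping.lookup v b)))"
  unfolding vmap_def by (rule sum.mono_neutral_left) (auto simp: assms in_keys_iff)

lemma lookup_vmap:
  assumes "\<And>b. F b 0 = 0"
  shows "Poly_Mapping.lookup (vmap F v) k = F k (Poly_Mapping.lookup v k)"
  using assms by (simp add: vmap_def lookup_sum_single sum.delta' in_keys_iff)

lemma lookup_vscale: "Poly_Mapping.lookup (vscale c v) k = pconst c * Poly_Mapping.lookup v k"
  unfolding vscale_def by (rule lookup_vmap) simp

lemma vscale_add: "vscale c (v + w) = vscale c v + vscale c w"
  by (rule poly_mapping_eqI) (simp add: lookup_vscale lookup_add distrib_left)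

lemma vscale_0_right [simp]: "vscale c 0 = 0"
  by (rule poly_mapping_eqI) (simp add: lookup_vscale)

lemma vscale_sum: "vscale c (\<Sum>i\<in>A. f i) = (\<Sum>i\<in>A. vscale c (f i))"
  by (induction A rule: infinite_finite_induct) (simp_all add: vscale_add)

lemma vscale_single: "vscale c (Poly_Mapping.single b p) = Poly_Mapping.single b (pconst c * p)"
  by (rule poly_mapping_eqI) (simp add: lookup_vscale lookup_single when_def)

lemma emode_eq_sum_superset:
  assumes "finite S" and "Poly_Mapping.keys v \<subseteq> S"
  shows "emode a n v = (\<Sum>b\<in>S. Poly_Mapping.single (a + b)
           (pconst (of_int (epsQ a b)) * emode_coeff a n b (Poly_Mapping.lookup v b)))"
  unfolding emode_def emode_coeff_def[symmetric]
  by (rule sum.mono_neutral_left) (auto simp: assms in_keys_iff)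

lemma heis_minus_1: "heis h (-1) v = vmap (\<lambda>_ p. hvar h 0 * p) v"
  by (simp add: heis_def hmul_eq_hvar_mult[abs_def])

lemma heis_minus_1_single_0:
  "heis h (-1) (Poly_Mapping.single 0 p) = Poly_Mapping.single 0 (hvar h 0 * p)"
  unfolding heis_minus_1 by (subst vmap_eq_sum_superset[of "{0}"]) auto

lemma heis_vac: "heis h (-1) vac = Poly_Mapping.single 0 (hvar h 0)"
  using heis_minus_1_single_0[of h 1] by (simp add: vac_def tens_def)

lemma emode_vac: "emode a (-1) vac = Poly_Mapping.single a 1"
  unfolding vac_def tens_def
  by (subst emode_eq_sum_superset[of "{0}"])
    (simp_all add: emode_coeff_pconst[of _ _ 1, simplified])

definition weight_one_vec :: "hvec \<Rightarrow> (rlat \<Rightarrow> complex) \<Rightarrow> VQ" where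
  "weight_one_vec h c =
     Poly_Mapping.single 0 (hvar h 0) + (\<Sum>b\<in>Phi. Poly_Mapping.single b (pconst (c b)))"

lemma gmode_vac: "gmode y (-1) vac = weight_one_vec (hpart y) (\<lambda>b. y (Inr b))"
  by (simp add: gmode_def heis_vac emode_vac vscale_single weight_one_vec_def)

lemma lookup_weight_one_vec:
  "Poly_Mapping.lookup (weight_one_vec h c) 0 = hvar h 0"
  "b \<in> Phi \<Longrightarrow> Poly_Mapping.lookup (weight_one_vec h c) b = pconst (c b)"
  using zero_notin_Phi
  by (auto simp: weight_one_vec_def lookup_add lookup_sum_single lookup_single when_def
      finite_Phi sum.delta')

lemma keys_weight_one_vec: "Poly_Mapping.keys (weight_one_vec h c) \<subseteq> insert 0 Phi"
  by (auto simp: in_keys_iff weight_one_vec_def lookup_add lookup_sum_single lookup_single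
      when_def finite_Phi sum.delta' split: if_splits)

lemma sum_insert_0_Phi: "(\<Sum>b\<in>insert 0 Phi. f b) = f 0 + (\<Sum>b\<in>Phi. f b)"
  using zero_notin_Phi finite_Phi by simp

lemma heis_weight_one_vec:
  "heis g (-1) (weight_one_vec h c) = Poly_Mapping.single 0 (hvar g 0 * hvar h 0)
     + (\<Sum>b\<in>Phi. Poly_Mapping.single b (hvar g 0 * pconst (c b)))"
  unfolding heis_minus_1
  by (subst vmap_eq_sum_superset[OF _ keys_weight_one_vec])
    (simp_all add: finite_Phi sum_insert_0_Phi lookup_weight_one_vec cong: sum.cong)

definition emode_hvar_coeff :: "rlat \<Rightarrow> hvec \<Rightarrow> fock" where
  "emode_hvar_coeff a g = hvar g 0 - hvar (toH a) 0 * pconst (hform (toH a) g)"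

definition emode_exp_coeff :: "rlat \<Rightarrow> rlat \<Rightarrow> fock" where
  "emode_exp_coeff a b = Em (toH a) (- lform a b) 1"

lemma emode_weight_one_vec:
  "emode a (-1) (weight_one_vec h c) = Poly_Mapping.single a (emode_hvar_coeff a h)
     + (\<Sum>b\<in>Phi. Poly_Mapping.single (a + b)
          (pconst (of_int (epsQ a b)) * (pconst (c b) * emode_exp_coeff a b)))"
  by (subst emode_eq_sum_superset[OF _ keys_weight_one_vec])
    (simp_all add: finite_Phi sum_insert_0_Phi lookup_weight_one_vec emode_coeff_hvar_0
      emode_coeff_pconst emode_hvar_coeff_def emode_exp_coeff_def cong: sum.cong)

definition quad :: "(idx \<Rightarrow> idx \<Rightarrow> complex) \<Rightarrow> fock" where
  "quad c = (\<Sum>r\<in>idxs. \<Sum>s\<in>idxs. pconst (c r s) * (pvar (r, 0) * pvar (s, 0)))"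

lemma quad_add: "quad (\<lambda>r s. c r s + d r s) = quad c + quad d"
  by (simp add: quad_def pconst_add distrib_right sum.distrib)

lemma hvar_mult_hvar: "hvar h 0 * hvar g 0 = quad (\<lambda>r s. h r * g s)"
  unfolding hvar_def quad_def sum_product by (simp add: pconst_mult mult_ac)

lemma hvar_mult_pconst: "hvar h 0 * pconst c = hvar (\<lambda>r. h r * c) 0"
  by (simp add: pconst_mult_hvar[symmetric] mult.commute)

lemma hform_add_right: "hform h (\<lambda>s. f s + g s) = hform h f + hform h g"
  by (simp add: hform_def distrib_left distrib_right sum.distrib)

lemma hform_scale_right: "hform h (\<lambda>s. c * g s) = c * hform h g"
  by (simp add: hform_def sum_distrib_left mult_ac)

lemma emode_hvar_coeff_add:
  "emode_hvar_coeff a (\<lambda>s. f s + g s) = emode_hvar_coeff a f + emode_hvar_coeff a g"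
  by (simp add: emode_hvar_coeff_def hvar_add hform_add_right pconst_add algebra_simps)

lemma pconst_mult_emode_hvar_coeff:
  "pconst c * emode_hvar_coeff a g = emode_hvar_coeff a (\<lambda>s. c * g s)"
  by (simp add: emode_hvar_coeff_def pconst_mult_hvar hform_scale_right pconst_mult
      right_diff_distrib mult_ac)

text \<open>The vector \<open>x(-1) y(-1) vac\<close> depends bilinearly on \<open>(x, y)\<close>; \<open>weight_two_vec\<close> is
  its linear extension to arbitrary coefficient matrices \<open>M\<close> on \<open>\<frak>g \<otimes> \<frak>g\<close>.\<close>

definition weight_two_vec :: "(idx + rlat \<Rightarrow> idx + rlat \<Rightarrow> complex) \<Rightarrow> VQ" where
  "weight_two_vec M =
     Poly_Mapping.single 0 (quad (\<lambda>r s. M (Inl r) (Inl s)))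
   + (\<Sum>b\<in>Phi. Poly_Mapping.single b (hvar (\<lambda>r. M (Inl r) (Inr b)) 0))
   + (\<Sum>a\<in>Phi. Poly_Mapping.single a (emode_hvar_coeff a (\<lambda>s. M (Inr a) (Inl s))))
   + (\<Sum>a\<in>Phi. \<Sum>b\<in>Phi. Poly_Mapping.single (a + b)
        (pconst (of_int (epsQ a b) * M (Inr a) (Inr b)) * emode_exp_coeff a b))"

lemma gmode_gmode_vac:
  "gmode x (-1) (gmode y (-1) vac) = weight_two_vec (\<lambda>k l. x k * y l)"
proof -
  have "gmode x (-1) (gmode y (-1) vac) =
      heis (hpart x) (-1) (weight_one_vec (hpart y) (\<lambda>b. y (Inr b)))
      + (\<Sum>a\<in>Phi. vscale (x (Inr a)) (emode a (-1) (weight_one_vec (hpart y) (\<lambda>b. y (Inr b)))))"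
    unfolding gmode_vac by (simp add: gmode_def)
  also have "\<dots> = weight_two_vec (\<lambda>k l. x k * y l)"
    by (simp add: heis_weight_one_vec emode_weight_one_vec vscale_add vscale_sum vscale_single
        weight_two_vec_def sum.distrib hvar_mult_hvar hvar_mult_pconst pconst_mult_hvar
        pconst_mult_emode_hvar_coeff pconst_mult hpart_def mult_ac add_ac)
  finally show ?thesis .
qed

lemma weight_two_vec_add:
  "weight_two_vec (\<lambda>k l. M k l + N k l) = weight_two_vec M + weight_two_vec N"
  by (simp add: weight_two_vec_def quad_add hvar_add emode_hvar_coeff_add single_add sum.distrib
      distrib_left distrib_right pconst_add add_ac)

lemma weight_two_vec_sum:
  "weight_two_vec (\<lambda>k l. \<Sum>i\<in>A. f i k l) = (\<Sum>i\<in>A. weight_two_vec (f i))"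
proof (induction A rule: infinite_finite_induct)
  case (insert i A)
  then show ?case by (simp add: weight_two_vec_add)
qed (simp_all add: weight_two_vec_def quad_def hvar_def emode_hvar_coeff_def hform_def)

text \<open>Rows of the inverse Cartan matrix: \<open>lam_coord i j\<close> is the \<open>\<alpha>\<^sub>j\<close>-coordinate of \<open>\<lambda>\<^sub>i\<close>.\<close>

definition lam_coord :: "idx \<Rightarrow> idx \<Rightarrow> complex" where
  "lam_coord r s = (case r of
     I1 \<Rightarrow> (case s of I1 \<Rightarrow> 4/3 | I2 \<Rightarrow> 1 | I3 \<Rightarrow> 5/3 | I4 \<Rightarrow> 2 | I5 \<Rightarrow> 4/3 | I6 \<Rightarrow> 2/3) |
     I2 \<Rightarrow> (case s of I1 \<Rightarrow> 1 | I2 \<Rightarrow> 2 | I3 \<Rightarrow> 2 | I4 \<Rightarrow> 3 | I5 \<Rightarrow> 2 | I6 \<Rightarrow> 1) |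
     I3 \<Rightarrow> (case s of I1 \<Rightarrow> 5/3 | I2 \<Rightarrow> 2 | I3 \<Rightarrow> 10/3 | I4 \<Rightarrow> 4 | I5 \<Rightarrow> 8/3 | I6 \<Rightarrow> 4/3) |
     I4 \<Rightarrow> (case s of I1 \<Rightarrow> 2 | I2 \<Rightarrow> 3 | I3 \<Rightarrow> 4 | I4 \<Rightarrow> 6 | I5 \<Rightarrow> 4 | I6 \<Rightarrow> 2) |
     I5 \<Rightarrow> (case s of I1 \<Rightarrow> 4/3 | I2 \<Rightarrow> 2 | I3 \<Rightarrow> 8/3 | I4 \<Rightarrow> 4 | I5 \<Rightarrow> 10/3 | I6 \<Rightarrow> 5/3) |
     I6 \<Rightarrow> (case s of I1 \<Rightarrow> 2/3 | I2 \<Rightarrow> 1 | I3 \<Rightarrow> 4/3 | I4 \<Rightarrow> 2 | I5 \<Rightarrow> 5/3 | I6 \<Rightarrow> 4/3))"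

lemma lam_eq: "lam i = lam_coord i"
  unfolding lam_def
proof (rule the_equality)
  show "\<forall>j\<in>idxs. hform (lam_coord i) (alphaH j) = (if j = i then 1 else 0)"
    by (cases i) (simp_all add: sum_idxs hform_expand alphaH_apply lam_coord_def idxs_def)
next
  fix h assume h: "\<forall>j\<in>idxs. hform h (alphaH j) = (if j = i then 1 else 0)"
  show "h = lam_coord i"
  proof
    fix s
    have "h s = (\<Sum>j\<in>idxs. hform h (alphaH j) * lam_coord j s)"
      by (cases s) (simp_all add: sum_idxs hform_expand alphaH_apply lam_coord_def field_simps)
    also have "\<dots> = (\<Sum>j\<in>idxs. if j = i then lam_coord j s else 0)"
      using h by (intro sum.cong) auto
    also have "\<dots> = lam_coord i s"
      by (simp add: sum.delta)
    finally show "h s = lam_coord i s" .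
  qed
qed

definition lam_avg :: "idx \<Rightarrow> idx \<Rightarrow> complex" where
  "lam_avg r s = (lam_coord r s + lam_coord (tauI r) s) / 2"

lemma hform_lam_avg: "hform h (lam_avg r) = (h r + h (tauI r)) / 2"
  by (cases r) (simp_all add: hform_expand lam_avg_def lam_coord_def field_simps)

lemma lam_avg_tauI: "lam_avg r (tauI s) = lam_avg r s"
  by (cases r; cases s) (simp_all add: lam_avg_def lam_coord_def)

lemma hform_add_left: "hform (\<lambda>s. f s + g s) h = hform f h + hform g h"
  by (simp add: hform_def distrib_left distrib_right sum.distrib)

lemma hform_scale_left: "hform (\<lambda>s. c * f s) h = c * hform f h"
  by (simp add: hform_def sum_distrib_left mult_ac)

lemma hform_commute: "hform f g = hform g f"
  by (simp add: hform_expand algebra_simps)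

lemma gform_add_left: "gform (\<lambda>k. x k + z k) y = gform x y + gform z y"
  by (simp add: gform_def hpart_def hform_add_left distrib_right sum.distrib)

lemma gform_scale_left: "gform (\<lambda>k. c * x k) y = c * gform x y"
  by (simp add: gform_def hpart_def hform_scale_left distrib_left sum_distrib_left mult_ac)

lemma gform_sum_left: "gform (\<lambda>k. \<Sum>i\<in>A. f i k) y = (\<Sum>i\<in>A. gform (f i) y)"
proof (induction A rule: infinite_finite_induct)
  case (insert i A)
  then show ?case by (simp add: gform_add_left)
qed (simp_all add: gform_def hpart_def hform_def)

lemma gform_commute: "gform x y = gform y x"
proof -
  have "(\<Sum>a\<in>Phi. x (Inr a) * y (Inr (- a)) * of_int (epsQ a (- a)))
      = (\<Sum>a\<in>Phi. x (Inr (- a)) * y (Inr (- (- a))) * of_int (epsQ (- a) (- (- a))))"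
    by (rule sum_Phi_reflect)
  also have "\<dots> = (\<Sum>a\<in>Phi. y (Inr a) * x (Inr (- a)) * of_int (epsQ a (- a)))"
    by (simp add: epsQ_uminus_commute mult_ac)
  finally show ?thesis
    by (simp add: gform_def hform_commute)
qed

lemma gform_diff_right: "gform x (\<lambda>k. y k - z k) = gform x y - gform x z"
proof -
  have "gform (\<lambda>k. y k + (-1) * z k) x = gform y x + (-1) * gform z x"
    by (simp only: gform_add_left gform_scale_left)
  then show ?thesis
    by (simp add: gform_commute)
qed

lemma in_aI:
  assumes "\<And>a. a \<notin> Phi \<Longrightarrow> x (Inr a) = 0" and "\<And>i. x (Inl (tauI i)) = x (Inl i)"
    and "\<And>a. x (Inr (tauQ a)) = x (Inr a)"
  shows "in_a x"
  using assms by (auto simp: in_a_def in_g_def tauG_def fun_eq_iff split: sum.split)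

lemma in_aD:
  assumes "in_a x"
  shows "a \<notin> Phi \<Longrightarrow> x (Inr a) = 0" and "x (Inl (tauI i)) = x (Inl i)"
    and "x (Inr (tauQ a)) = x (Inr a)"
  using assms by (auto simp: in_a_def in_g_def tauG_def fun_eq_iff split: sum.split_asm dest: spec)

lemma in_a_lincomb: "(\<And>i. i \<in> A \<Longrightarrow> in_a (v i)) \<Longrightarrow> in_a (\<lambda>l. \<Sum>i\<in>A. c i * v i l)"
  by (rule in_aI) (simp_all add: in_aD)

lemma in_a_diff: "in_a x \<Longrightarrow> in_a y \<Longrightarrow> in_a (\<lambda>l. x l - y l)"
  by (rule in_aI) (simp_all add: in_aD)

section \<open>The Casimir tensor of \<open>\<frak>a\<close>\<close>

lemma sum_apply: "(\<Sum>i\<in>A. f i) x = (\<Sum>i\<in>A. f i x)"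
  by (induction A rule: infinite_finite_induct) simp_all

lemma dual_basis_expansion:
  assumes "is_basis_a d u" and "is_dual_basis_a d u u'" and "in_a x"
  shows "x = (\<lambda>k. \<Sum>i<d. gform x (u' i) * u i k)"
proof -
  obtain c where "x = (\<Sum>i<d. gsmult (c i) (u i))"
    using assms(1,3) unfolding is_basis_a_def by blast
  then have x: "x = (\<lambda>k. \<Sum>i<d. c i * u i k)"
    by (simp add: fun_eq_iff gsmult_def sum_apply)
  have "gform x (u' j) = c j" if "j < d" for j
  proof -
    have "gform x (u' j) = (\<Sum>i<d. c i * (if i = j then 1 else 0))"
      using assms(2) that
      by (subst x) (simp add: gform_sum_left gform_scale_left is_dual_basis_a_def)
    also have "\<dots> = c j"
      using that by (simp add: if_distrib sum.delta cong: if_cong)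
    finally show ?thesis .
  qed
  then show ?thesis
    by (subst x) (simp add: fun_eq_iff)
qed

text \<open>In particular \<open>\<Sum>\<^sub>i u\<^sub>i \<otimes> u\<^sup>i\<close> does not depend on the chosen basis.\<close>

lemma dual_basis_tensor_eq:
  assumes "is_basis_a d u" and "is_dual_basis_a d u u'"
    and "in_a D" and D: "\<And>x. in_a x \<Longrightarrow> gform x D = x k"
  shows "(\<lambda>l. \<Sum>i<d. u i k * u' i l) = D"
proof -
  let ?M = "\<lambda>l. \<Sum>i<d. u i k * u' i l"
  have "in_a ?M"
    using assms(2) by (intro in_a_lincomb) (simp add: is_dual_basis_a_def)
  then have Z: "in_a (\<lambda>l. ?M l - D l)"
    using assms(3) by (rule in_a_diff)
  have "gform x ?M = x k" if "in_a x" for x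
  proof -
    have "gform x ?M = (\<Sum>i<d. gform x (u' i) * u i k)"
      by (simp add: gform_commute[of x] gform_sum_left gform_scale_left mult.commute)
    also have "\<dots> = x k"
      using fun_cong[OF dual_basis_expansion[OF assms(1,2) that], of k] by simp
    finally show ?thesis .
  qed
  then have "gform (u' i) (\<lambda>l. ?M l - D l) = 0" if "i < d" for i
    using assms(2) that D by (simp add: gform_diff_right is_dual_basis_a_def)
  then have "(\<lambda>l. ?M l - D l) = (\<lambda>l. 0)"
    using dual_basis_expansion[OF assms(1,2) Z] by (simp add: gform_commute)
  then show ?thesis
    by (simp add: fun_eq_iff)
qed

definition eps_opp :: "rlat \<Rightarrow> complex" where
  "eps_opp a = of_int (epsQ a (- a))"

lemma eps_opp_square: "eps_opp a * eps_opp a = 1"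
  using epsQ_uminus_cases[of a] by (auto simp: eps_opp_def)

lemma eps_opp_tauQ: "eps_opp (tauQ a) = eps_opp a"
  by (simp add: eps_opp_def epsQ_tauQ_uminus)

text \<open>The \<open>\<tau>\<close>-average of the dual coordinates of \<open>\<frak>g\<close>: on \<open>\<frak>h\<close> this averages \<open>\<lambda>\<^sub>r\<close> and
  \<open>\<lambda>\<^sub>\<tau>\<^sub>r\<close>, and the dual of \<open>x\<^sub>a\<close> is \<open>\<epsilon>(a,-a) x\<^sub>-\<^sub>a\<close>.\<close>

definition casimir_a :: "idx + rlat \<Rightarrow> gel" where
  "casimir_a k = (case k of
       Inl r \<Rightarrow> (\<lambda>l. case l of Inl s \<Rightarrow> lam_avg r s | Inr _ \<Rightarrow> 0)
     | Inr a \<Rightarrow> (\<lambda>l. case l of Inl _ \<Rightarrow> 0 | Inr b \<Rightarrow>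
          (if a \<in> Phi
           then eps_opp a / 2 * ((if b = - a then 1 else 0) + (if b = - tauQ a then 1 else 0))
           else 0)))"

lemma casimir_a_simps [simp]:
  "casimir_a (Inl r) (Inl s) = lam_avg r s" "casimir_a (Inl r) (Inr b) = 0"
  "casimir_a (Inr a) (Inl s) = 0"
  "casimir_a (Inr a) (Inr b) = (if a \<in> Phi
     then eps_opp a / 2 * ((if b = - a then 1 else 0) + (if b = - tauQ a then 1 else 0)) else 0)"
  by (simp_all add: casimir_a_def)

lemma in_a_casimir_a: "in_a (casimir_a k)"
proof (cases k)
  case (Inl r)
  then show ?thesis by (auto intro: in_aI simp: lam_avg_tauI)
next
  case (Inr a)
  then show ?thesis
    by (auto intro!: in_aI simp: uminus_in_Phi tauQ_in_Phi tauQ_eq_uminus_iff add.commute)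
qed

lemma gform_casimir_a:
  assumes "in_a x" shows "gform x (casimir_a k) = x k"
proof (cases k)
  case (Inl r)
  have "hpart (casimir_a (Inl r)) = lam_avg r"
    by (simp add: hpart_def fun_eq_iff)
  then show ?thesis
    using in_aD(2)[OF assms, of r] by (simp add: Inl gform_def hform_lam_avg hpart_def)
next
  case (Inr a)
  have h: "hpart (casimir_a (Inr a)) = (\<lambda>s. 0)"
    by (simp add: hpart_def fun_eq_iff)
  show ?thesis
  proof (cases "a \<in> Phi")
    case False
    then show ?thesis
      using in_aD(1)[OF assms False] by (simp add: Inr gform_def h hform_def)
  next
    case True
    let ?f = "\<lambda>c. x (Inr c) * (eps_opp a / 2) * eps_opp c"
    have "(\<Sum>c\<in>Phi. x (Inr c) * casimir_a (Inr a) (Inr (- c)) * of_int (epsQ c (- c)))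
        = (\<Sum>c\<in>Phi. (if c = a then ?f c else 0) + (if c = tauQ a then ?f c else 0))"
      by (rule sum.cong) (auto simp: True eps_opp_def algebra_simps)
    also have "\<dots> = ?f a + ?f (tauQ a)"
      by (simp add: sum.distrib finite_Phi True tauQ_in_Phi)
    also have "\<dots> = x (Inr a)"
      using in_aD(3)[OF assms, of a] eps_opp_square[of a] eps_opp_tauQ[of a]
      by (simp add: field_simps)
    finally show ?thesis
      by (simp add: gform_def Inr h hform_def)
  qed
qed

lemma sum_gmode_dual_basis_vac:
  assumes "is_basis_a d u" and "is_dual_basis_a d u u'"
  shows "(\<Sum>i<d. gmode (u i) (-1) (gmode (u' i) (-1) vac)) = weight_two_vec casimir_a"
proof -
  have "(\<lambda>l. \<Sum>i<d. u i k * u' i l) = casimir_a k" for k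
    by (rule dual_basis_tensor_eq[OF assms in_a_casimir_a gform_casimir_a])
  then have "(\<lambda>k l. \<Sum>i<d. u i k * u' i l) = casimir_a"
    by (simp add: fun_eq_iff)
  then show ?thesis
    by (simp add: gmode_gmode_vac weight_two_vec_sum[symmetric])
qed

definition twist_coeff :: "rlat \<Rightarrow> fock" where
  "twist_coeff a =
     pconst (of_int (epsQ a (- tauQ a)) * eps_opp a / 2) * emode_exp_coeff a (- tauQ a)"

lemma emode_exp_coeff_uminus:
  "a \<in> Phi \<Longrightarrow> emode_exp_coeff a (- a) = Em (toH a) 2 1"
  by (simp add: emode_exp_coeff_def lform_uminus_right Phi_def)

lemma casimir_a_root_sum:
  assumes a: "a \<in> Phi"
  shows "(\<Sum>b\<in>Phi. Poly_Mapping.single (a + b)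
            (pconst (of_int (epsQ a b) * casimir_a (Inr a) (Inr b)) * emode_exp_coeff a b))
     = Poly_Mapping.single 0 (pconst (1/2) * Em (toH a) 2 1)
       + Poly_Mapping.single (a - tauQ a) (twist_coeff a)"
proof -
  let ?g = "\<lambda>b. Poly_Mapping.single (a + b)
    (pconst (of_int (epsQ a b) * (eps_opp a / 2)) * emode_exp_coeff a b)"
  have "(\<Sum>b\<in>Phi. Poly_Mapping.single (a + b)
            (pconst (of_int (epsQ a b) * casimir_a (Inr a) (Inr b)) * emode_exp_coeff a b))
     = (\<Sum>b\<in>Phi. (if b = - a then ?g b else 0) + (if b = - tauQ a then ?g b else 0))"
    by (rule sum.cong) (auto simp: a distrib_left pconst_add distrib_right single_add)
  also have "\<dots> = ?g (- a) + ?g (- tauQ a)"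
    by (simp add: sum.distrib finite_Phi a tauQ_in_Phi uminus_in_Phi)
  also have "?g (- a) = Poly_Mapping.single 0 (pconst (1/2) * Em (toH a) 2 1)"
    using eps_opp_square[of a] by (simp add: eps_opp_def[symmetric] emode_exp_coeff_uminus a)
  also have "?g (- tauQ a) = Poly_Mapping.single (a - tauQ a) (twist_coeff a)"
    by (simp add: twist_coeff_def)
  finally show ?thesis .
qed

lemma weight_two_vec_casimir_a_sum:
  "weight_two_vec casimir_a = Poly_Mapping.single 0 (quad lam_avg)
     + (\<Sum>a\<in>Phi. Poly_Mapping.single 0 (pconst (1/2) * Em (toH a) 2 1)
         + Poly_Mapping.single (a - tauQ a) (twist_coeff a))"
proof -
  have "(\<Sum>a\<in>Phi. \<Sum>b\<in>Phi. Poly_Mapping.single (a + b)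
          (pconst (of_int (epsQ a b) * casimir_a (Inr a) (Inr b)) * emode_exp_coeff a b))
      = (\<Sum>a\<in>Phi. Poly_Mapping.single 0 (pconst (1/2) * Em (toH a) 2 1)
          + Poly_Mapping.single (a - tauQ a) (twist_coeff a))"
    by (rule sum.cong [OF refl]) (rule casimir_a_root_sum)
  then show ?thesis
    by (simp add: weight_two_vec_def hvar_def emode_hvar_coeff_def hform_def
        del: casimir_a_simps(4))
qed

lemma lookup_weight_two_vec_casimir_a:
  "Poly_Mapping.lookup (weight_two_vec casimir_a) k =
     (if k = 0 then quad lam_avg + (\<Sum>a\<in>Phi. pconst (1/2) * Em (toH a) 2 1) else 0)
     + (\<Sum>a\<in>Phi. if a - tauQ a = k then twist_coeff a else 0)"
  unfolding weight_two_vec_casimir_a_sum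
  by (simp add: lookup_add lookup_sum lookup_single when_def sum.distrib)

definition tau_weight :: "rlat \<Rightarrow> complex" where
  "tau_weight a = (if tauQ a = a then 1 else 1/2)"

definition root_quad :: "idx \<Rightarrow> idx \<Rightarrow> complex" where
  "root_quad r s = (case r of
     I1 \<Rightarrow> (case s of I1 \<Rightarrow> 11 | I2 \<Rightarrow> 9 | I3 \<Rightarrow> 29/2 | I4 \<Rightarrow> 18 | I5 \<Rightarrow> 25/2 | I6 \<Rightarrow> 7) |
     I2 \<Rightarrow> (case s of I1 \<Rightarrow> 9 | I2 \<Rightarrow> 18 | I3 \<Rightarrow> 18 | I4 \<Rightarrow> 27 | I5 \<Rightarrow> 18 | I6 \<Rightarrow> 9) |
     I3 \<Rightarrow> (case s of I1 \<Rightarrow> 29/2 | I2 \<Rightarrow> 18 | I3 \<Rightarrow> 29 | I4 \<Rightarrow> 36 | I5 \<Rightarrow> 25 | I6 \<Rightarrow> 25/2) |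
     I4 \<Rightarrow> (case s of I1 \<Rightarrow> 18 | I2 \<Rightarrow> 27 | I3 \<Rightarrow> 36 | I4 \<Rightarrow> 54 | I5 \<Rightarrow> 36 | I6 \<Rightarrow> 18) |
     I5 \<Rightarrow> (case s of I1 \<Rightarrow> 25/2 | I2 \<Rightarrow> 18 | I3 \<Rightarrow> 25 | I4 \<Rightarrow> 36 | I5 \<Rightarrow> 29 | I6 \<Rightarrow> 29/2) |
     I6 \<Rightarrow> (case s of I1 \<Rightarrow> 7 | I2 \<Rightarrow> 9 | I3 \<Rightarrow> 25/2 | I4 \<Rightarrow> 18 | I5 \<Rightarrow> 29/2 | I6 \<Rightarrow> 11))"

lemma quad_sum: "quad (\<lambda>r s. \<Sum>i\<in>A. f i r s) = (\<Sum>i\<in>A. quad (f i))"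
  by (induction A rule: infinite_finite_induct) (simp_all add: quad_add quad_def)

lemma pconst_mult_quad: "pconst c * quad f = quad (\<lambda>r s. c * f r s)"
  by (simp add: quad_def sum_distrib_left pconst_mult mult.assoc)

lemma sum_Em_2_roots: "(\<Sum>a\<in>Phi. pconst (tau_weight a) * Em (toH a) 2 1) = quad root_quad"
proof -
  have "pconst w * Em (toH a) 2 1
      = quad (\<lambda>r s. w / 2 * (toH a r * toH a s)) + hvar (\<lambda>r. w / 2 * toH a r) 1" for w a
    by (simp add: Em_2 hvar_mult_hvar pconst_mult_quad pconst_mult_hvar distrib_left
        mult.assoc[symmetric] pconst_mult[symmetric])
  then have "(\<Sum>a\<in>Phi. pconst (tau_weight a) * Em (toH a) 2 1)
      = quad (\<lambda>r s. \<Sum>a\<in>Phi. tau_weight a / 2 * (toH a r * toH a s))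
        + hvar (\<lambda>r. \<Sum>a\<in>Phi. tau_weight a / 2 * toH a r) 1"
    by (simp add: sum.distrib quad_sum hvar_sum)
  also have "(\<lambda>r. \<Sum>a\<in>Phi. tau_weight a / 2 * toH a r) = (\<lambda>r. 0)"
  proof
    fix r show "(\<Sum>a\<in>Phi. tau_weight a / 2 * toH a r) = 0"
      unfolding sum_Phi E6_roots_def by (cases r) (simp_all add: tau_weight_def toH_def)
  qed
  also have "(\<lambda>r s. \<Sum>a\<in>Phi. tau_weight a / 2 * (toH a r * toH a s)) = root_quad"
  proof (intro ext)
    fix r s show "(\<Sum>a\<in>Phi. tau_weight a / 2 * (toH a r * toH a s)) = root_quad r s"
      unfolding sum_Phi E6_roots_def
      by (cases r; cases s) (simp_all add: tau_weight_def toH_def root_quad_def)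
  qed
  finally show ?thesis
    by (simp add: hvar_def)
qed

lemma lookup_weight_two_vec_casimir_a_0:
  "Poly_Mapping.lookup (weight_two_vec casimir_a) 0 = quad (\<lambda>r s. lam_avg r s + root_quad r s)"
proof -
  have "twist_coeff a = pconst (1/2) * Em (toH a) 2 1" if "a \<in> Phi" "tauQ a = a" for a
    using that eps_opp_square[of a]
    by (simp add: twist_coeff_def eps_opp_def[symmetric] emode_exp_coeff_uminus)
  then have "pconst (1/2) * Em (toH a) 2 1 + (if a - tauQ a = 0 then twist_coeff a else 0)
      = pconst (tau_weight a) * Em (toH a) 2 1" if "a \<in> Phi" for a
    using that by (auto simp: tau_weight_def simp flip: distrib_right pconst_add)
  then show ?thesis
    by (simp add: lookup_weight_two_vec_casimir_a add.assoc sum.distrib[symmetric]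
        sum_Em_2_roots quad_add cong: sum.cong)
qed

definition root_coeff :: "rlat \<Rightarrow> complex" where
  "root_coeff k =
     (\<Sum>a\<in>Phi. if a - tauQ a = k then of_int (epsQ a (- tauQ a)) * eps_opp a / 2 else 0)"

lemma lform_tauQ_moved_root: "a \<in> Phi \<Longrightarrow> tauQ a \<noteq> a \<Longrightarrow> lform a (tauQ a) = 0"
  unfolding Phi_eq E6_roots_def by (auto simp: lform_expand)

lemma lookup_weight_two_vec_casimir_a_nonzero:
  assumes "k \<noteq> 0"
  shows "Poly_Mapping.lookup (weight_two_vec casimir_a) k = pconst (root_coeff k)"
proof -
  have twist: "twist_coeff a = pconst (of_int (epsQ a (- tauQ a)) * eps_opp a / 2)"
    if "a \<in> Phi" "a - tauQ a = k" for a
    using that assms lform_tauQ_moved_root[of a]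
    by (auto simp: twist_coeff_def emode_exp_coeff_def lform_uminus_right)
  have "Poly_Mapping.lookup (weight_two_vec casimir_a) k
      = (\<Sum>a\<in>Phi. if a - tauQ a = k then twist_coeff a else 0)"
    using assms by (simp add: lookup_weight_two_vec_casimir_a)
  also have "\<dots> = pconst (root_coeff k)"
    unfolding root_coeff_def pconst_sum by (rule sum.cong) (simp_all add: twist)
  finally show ?thesis .
qed

lemma root_coeff_values:
  "root_coeff (vec6 1 0 0 0 0 (-1)) = 4" "root_coeff (vec6 (-1) 0 0 0 0 1) = 4"
  "root_coeff (vec6 0 0 1 0 (-1) 0) = 4" "root_coeff (vec6 0 0 (-1) 0 1 0) = 4"
  "root_coeff (vec6 1 0 1 0 (-1) (-1)) = -4" "root_coeff (vec6 (-1) 0 (-1) 0 1 1) = -4"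
  unfolding root_coeff_def sum_Phi E6_roots_def
  by (simp_all add: epsQ_expand parity_sign_def eps_opp_def)

lemma root_coeff_other:
  assumes "k \<notin> {0, vec6 1 0 0 0 0 (-1), vec6 (-1) 0 0 0 0 1, vec6 0 0 1 0 (-1) 0,
    vec6 0 0 (-1) 0 1 0, vec6 1 0 1 0 (-1) (-1), vec6 (-1) 0 (-1) 0 1 1}"
  shows "root_coeff k = 0"
proof -
  have "\<forall>a\<in>Phi. a - tauQ a \<in> {0, vec6 1 0 0 0 0 (-1), vec6 (-1) 0 0 0 0 1, vec6 0 0 1 0 (-1) 0,
      vec6 0 0 (-1) 0 1 0, vec6 1 0 1 0 (-1) (-1), vec6 (-1) 0 (-1) 0 1 1}"
    unfolding Phi_eq E6_roots_def by simp
  then show ?thesis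
    using assms unfolding root_coeff_def by (intro sum.neutral) fastforce
qed

lemma weight_two_vec_casimir_a_eq:
  "weight_two_vec casimir_a =
     Poly_Mapping.single 0 (quad (\<lambda>r s. lam_avg r s + root_quad r s))
     - vscale 4
        ((- tens 1 (alphaQ I1 - alphaQ I6) - tens 1 (alphaQ I3 - alphaQ I5)
          + tens 1 (alphaQ I1 + alphaQ I3 - alphaQ I5 - alphaQ I6))
       + (- tens 1 (- alphaQ I1 + alphaQ I6) - tens 1 (- alphaQ I3 + alphaQ I5)
          + tens 1 (- alphaQ I1 - alphaQ I3 + alphaQ I5 + alphaQ I6)))"
    (is "_ = ?R")
proof (rule poly_mapping_eqI)
  fix k
  have R: "Poly_Mapping.lookup ?R k =
      (if k = 0 then quad (\<lambda>r s. lam_avg r s + root_quad r s) else 0)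
      - pconst 4 * (- (if k = vec6 1 0 0 0 0 (-1) then 1 else 0)
          - (if k = vec6 0 0 1 0 (-1) 0 then 1 else 0)
          + (if k = vec6 1 0 1 0 (-1) (-1) then 1 else 0)
          - (if k = vec6 (-1) 0 0 0 0 1 then 1 else 0)
          - (if k = vec6 0 0 (-1) 0 1 0 then 1 else 0)
          + (if k = vec6 (-1) 0 (-1) 0 1 1 then 1 else 0))"
    by (simp add: lookup_minus lookup_add lookup_vscale tens_def alphaQ_vec6 lookup_single when_def
        eq_commute[of _ k])
  show "Poly_Mapping.lookup (weight_two_vec casimir_a) k = Poly_Mapping.lookup ?R k"
  proof (cases "k \<in> {0, vec6 1 0 0 0 0 (-1), vec6 (-1) 0 0 0 0 1, vec6 0 0 1 0 (-1) 0,
      vec6 0 0 (-1) 0 1 0, vec6 1 0 1 0 (-1) (-1), vec6 (-1) 0 (-1) 0 1 1}")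
    case True
    then show ?thesis
      unfolding R
      by (elim insertE emptyE) (simp_all add: lookup_weight_two_vec_casimir_a_0
          lookup_weight_two_vec_casimir_a_nonzero root_coeff_values pconst_uminus[symmetric]
          pconst_mult[symmetric])
  next
    case False
    then show ?thesis
      unfolding R
      by (auto simp: lookup_weight_two_vec_casimir_a_nonzero root_coeff_other)
  qed
qed

lemma vscale_diff: "vscale c (v - w) = vscale c v - vscale c w"
  by (rule poly_mapping_eqI) (simp add: lookup_vscale lookup_minus right_diff_distrib)

lemma vscale_vscale: "vscale c (vscale c' v) = vscale (c * c') v"
  by (rule poly_mapping_eqI) (simp add: lookup_vscale pconst_mult mult.assoc)

lemma quad_swap: "quad f = quad (\<lambda>r s. f s r)"
  unfolding quad_def by (subst sum.swap) (simp add: mult.commute)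

lemma quad_cong_symmetric:
  assumes "\<And>r s. f r s + f s r = g r s + g s r"
  shows "quad f = quad g"
proof -
  have sym: "quad h = pconst (1/2) * quad (\<lambda>r s. h r s + h s r)" for h
  proof -
    have "quad (\<lambda>r s. h r s + h s r) = quad h + quad h"
      by (simp only: quad_add quad_swap[of "\<lambda>r s. h s r"])
    also have "pconst (1/2) * (quad h + quad h) = pconst (1/2 + 1/2) * quad h"
      by (simp only: distrib_left distrib_right pconst_add)
    finally show ?thesis
      by simp
  qed
  show ?thesis
    by (subst (1 2) sym) (simp add: assms)
qed

lemma quad_diff: "quad (\<lambda>r s. f r s - g r s) = quad f - quad g"
  using quad_add[of "\<lambda>r s. f r s - g r s" g] by simp

lemma heis_heis_vac:
  "heis h (-1) (heis h (-1) vac) = Poly_Mapping.single 0 (quad (\<lambda>r s. h r * h s))"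
  by (simp add: heis_vac heis_minus_1_single_0 hvar_mult_hvar)

lemma omegaE6_eq: "omegaE6 = Poly_Mapping.single 0 (quad (\<lambda>r s. lam_coord r s / 2))"
proof -
  have "(\<Sum>i\<in>idxs. heis (alphaH i) (-1) (heis (lam i) (-1) vac))
      = Poly_Mapping.single 0 (quad (\<lambda>r s. \<Sum>i\<in>idxs. alphaH i r * lam_coord i s))"
    by (simp add: heis_vac heis_minus_1_single_0 hvar_mult_hvar lam_eq quad_sum single_sum)
  also have "(\<lambda>r s. \<Sum>i\<in>idxs. alphaH i r * lam_coord i s) = lam_coord"
  proof (intro ext)
    fix r s
    show "(\<Sum>i\<in>idxs. alphaH i r * lam_coord i s) = lam_coord r s"
      by (cases r) (simp_all add: sum_idxs alphaH_apply)
  qed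
  finally show ?thesis
    by (simp add: omegaE6_def vscale_single pconst_mult_quad zero_fun_def)
qed

lemma coset_quad_eq:
  "quad (\<lambda>r s. lam_coord r s / 2) - pconst (1/20) * quad (\<lambda>r s. lam_avg r s + root_quad r s)
   = pconst (1/10) *
      (quad (\<lambda>r s. (- lam I1 + lam I6) r * (- lam I1 + lam I6) s)
     + quad (\<lambda>r s. (lam I3 - lam I5) r * (lam I3 - lam I5) s)
     + quad (\<lambda>r s. (lam I1 - lam I3 + lam I5 - lam I6) r * (lam I1 - lam I3 + lam I5 - lam I6) s))"
  unfolding pconst_mult_quad quad_add[symmetric] quad_diff[symmetric] distrib_left[symmetric]
proof (rule quad_cong_symmetric)
  fix r s
  show "lam_coord r s / 2 - 1/20 * (lam_avg r s + root_quad r s)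
      + (lam_coord s r / 2 - 1/20 * (lam_avg s r + root_quad s r))
      = 1/10 * ((- lam I1 + lam I6) r * (- lam I1 + lam I6) s
          + (lam I3 - lam I5) r * (lam I3 - lam I5) s
          + (lam I1 - lam I3 + lam I5 - lam I6) r * (lam I1 - lam I3 + lam I5 - lam I6) s)
      + 1/10 * ((- lam I1 + lam I6) s * (- lam I1 + lam I6) r
          + (lam I3 - lam I5) s * (lam I3 - lam I5) r
          + (lam I1 - lam I3 + lam I5 - lam I6) s * (lam I1 - lam I3 + lam I5 - lam I6) r)"
    by (cases r; cases s) (simp_all add: lam_eq lam_coord_def lam_avg_def root_quad_def)
qed

theorem theorem5p2:
  fixes d :: nat and u u' :: "nat \<Rightarrow> gel"
  assumes "is_basis_a d u" and "is_dual_basis_a d u u'"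
  shows "omegaE6 - omegaF4 d u u' =
      vscale (1/10)
        (heis (- lam I1 + lam I6) (-1) (heis (- lam I1 + lam I6) (-1) vac)
       + heis (lam I3 - lam I5) (-1) (heis (lam I3 - lam I5) (-1) vac)
       + heis (lam I1 - lam I3 + lam I5 - lam I6) (-1)
              (heis (lam I1 - lam I3 + lam I5 - lam I6) (-1) vac))
    + vscale (1/5)
        (- tens 1 (alphaQ I1 - alphaQ I6) - tens 1 (alphaQ I3 - alphaQ I5)
         + tens 1 (alphaQ I1 + alphaQ I3 - alphaQ I5 - alphaQ I6))
    + vscale (1/5)
        (- tens 1 (- alphaQ I1 + alphaQ I6) - tens 1 (- alphaQ I3 + alphaQ I5)
         + tens 1 (- alphaQ I1 - alphaQ I3 + alphaQ I5 + alphaQ I6))"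
  (is "_ = vscale (1/10) ?H + vscale (1/5) ?P + vscale (1/5) ?N")
proof -
  let ?C = "quad (\<lambda>r s. lam_avg r s + root_quad r s)"
  have F4: "omegaF4 d u u' = Poly_Mapping.single 0 (pconst (1/20) * ?C) - vscale (1/5) (?P + ?N)"
    by (simp add: omegaF4_def sum_gmode_dual_basis_vac[OF assms] weight_two_vec_casimir_a_eq
        vscale_diff vscale_vscale vscale_single)
  have H: "vscale (1/10) ?H =
      Poly_Mapping.single 0 (quad (\<lambda>r s. lam_coord r s / 2) - pconst (1/20) * ?C)"
    by (simp only: coset_quad_eq heis_heis_vac vscale_add vscale_single single_add distrib_left)
  have "omegaE6 - omegaF4 d u u' = Poly_Mapping.single 0 (quad (\<lambda>r s. lam_coord r s / 2))
      - (Poly_Mapping.single 0 (pconst (1/20) * ?C) - vscale (1/5) (?P + ?N))"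
    by (simp only: omegaE6_eq F4)
  also have "\<dots> = vscale (1/10) ?H + vscale (1/5) ?P + vscale (1/5) ?N"
    unfolding H single_diff by (simp add: vscale_add vscale_diff algebra_simps)
  finally show ?thesis .
qed

end
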